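(* Assume (A1) all matrices of the dynamics and cost are independent of $n$; (A6) the initial local states $x^1_1,\dots,x^n_1$ are independent with a common mean $\mu_x$ (bounded, independent of $n$), for each $t$ the local noises $w^1_t,\dots,w^n_t$ are independent, and $\mathrm{Var}(x^i_1),\mathrm{Var}(w^i_t)$ are bounded and independent of $n$; (A7) the weights are asymptotically vanishing and there is $n_0$ such that for every $n\ge n_0$ the subgame perfect Nash equilibrium $\mathbf g^*_n$ exists, is unique and has the form $u^i_t=\theta^n_tx^i_t+(\bar\theta^n_t-\theta^n_t)\bar x_t$ with $\theta^n_t,\bar\theta^n_t$ uniformly bounded in $n$ and converging to $\theta^\infty_t,\bar\theta^\infty_t$. Then for every $t_0\in\mathbb N_T$, $\lim_{n\to\infty}\Delta J_P(\hat{\mathbf g}_n,\mathbf g^*_n)_{t_0}=0$ and $\lim_{n\to\infty}\Delta J_P(\hat{\mathbf g}_\infty,\mathbf g^*_n)_{t_0}=0$.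
   Context: Fix $T\ge1$, $d_x,d_u\ge1$, $n\ge2$; $\mathbb N_k=\{1,\dots,k\}$. Player $i\in\mathbb N_n$ has state $x^i_t\in\mathbb R^{d_x}$, action $u^i_t\in\mathbb R^{d_u}$, noise $w^i_t\in\mathbb R^{d_x}$; $\mathbf x_t=(x^1_t,\dots,x^n_t)$. Real weights $\alpha^i_n$, $\sum_i\alpha^i_n=1$; asymptotically vanishing means there exist $n_0$, $\gamma_{\max}>0$ with $\alpha^i_n=\gamma^i/n$, $\gamma^i\in[-\gamma_{\max},\gamma_{\max}]$, for $n>n_0$. $\bar x_t=\sum_i\alpha^i_nx^i_t$, $\bar u_t=\sum_i\alpha^i_nu^i_t$. Dynamics $x^i_{t+1}=A_tx^i_t+B_tu^i_t+\bar A_t\bar x_t+\bar B_t\bar u_t+w^i_t$; zero-mean noises; $\mathbf x_1,\mathbf w_1,\dots,\mathbf w_T$ mutually independent with covariances bounded by constant matrices. Per-step cost $c^i_t=(x^i_t)^\top Q_tx^i_t+2(x^i_t)^\top S^x_t\bar x_t+\bar x_t^\top\bar Q_t\bar x_t+(u^i_t)^\top R_tu^i_t+2(u^i_t)^\top S^u_t\bar u_t+\bar u_t^\top\bar R_t\bar u_t+\sum_j\alpha^j_n((x^j_t)^\top G^x_tx^j_t+(u^j_t)^\top G^u_tu^j_t)$, symmetric matrices; $J^i_n(\mathbf g)_{t_0}=\mathbb E^{\mathbf g}[\sum_{t=t_0}^Tc^i_t]$. Subgame perfect Nash equilibrium: a profile of perfect-sharing strategies ($u^i_t=g^i_t(\mathbf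 x_{1:t})$) from which no player can lower $J^i_n(\cdot)_{t_0}$ at any $t_0$ by a unilateral perfect-sharing deviation. Predictions: $z^n_1=z^\infty_1=\mathbb E[\bar x_1]$, $z^n_{t+1}=(A_t+\bar A_t+(B_t+\bar B_t)\bar\theta^n_t)z^n_t$, $z^\infty_{t+1}=(A_t+\bar A_t+(B_t+\bar B_t)\bar\theta^\infty_t)z^\infty_t$. The no-sharing profile $\hat{\mathbf g}_n$ (SAPDE) is $\hat u^i_t=\theta^n_t\hat x^i_t+(\bar\theta^n_t-\theta^n_t)z^n_t$, and $\hat{\mathbf g}_\infty$ (SWMFE) is $\hat u^i_t=\theta^\infty_t\hat x^i_t+(\bar\theta^\infty_t-\theta^\infty_t)z^\infty_t$, where $\hat x^i_t$ is the state of player $i$ under that profile (same initial states and noises, same dynamics). Performance gap: $\Delta J_P(\hat{\mathbf g},\mathbf g^*_n)_{t_0}=\max_{i\in\mathbb N_n}|J^i_n(\hat{\mathbf g})_{t_0}-J^i_n(\mathbf g^*_n)_{t_0}|$. *)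

theory Defs
  imports "HOL-Probability.Probability"
begin

text \<open>Model data (A1: independent of the number of players n).
  Vectors in R^{d_x}, R^{d_u} are real^'x, real^'u; a d1 x d2 matrix is real^'d2^'d1.\<close>

record ('x::finite, 'u::finite) lqm =
  mA  :: "nat \<Rightarrow> real^'x^'x"
  mB  :: "nat \<Rightarrow> real^'u^'x"
  mAb :: "nat \<Rightarrow> real^'x^'x"
  mBb :: "nat \<Rightarrow> real^'u^'x"
  mQ  :: "nat \<Rightarrow> real^'x^'x"
  mSx :: "nat \<Rightarrow> real^'x^'x"
  mQb :: "nat \<Rightarrow> real^'x^'x"
  mR  :: "nat \<Rightarrow> real^'u^'u"
  mSu :: "nat \<Rightarrow> real^'u^'u"
  mRb :: "nat \<Rightarrow> real^'u^'u"
  mGx :: "nat \<Rightarrow> real^'x^'x"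
  mGu :: "nat \<Rightarrow> real^'u^'u"

text \<open>A history H s j = state of player j at time s (for s \<le> t, j \<in> {1..n}; zero otherwise).
  A perfect-sharing strategy profile: g i t H = action of player i at time t given history x_{1:t}.\<close>
type_synonym ('x, 'u) strat = "nat \<Rightarrow> nat \<Rightarrow> (nat \<Rightarrow> nat \<Rightarrow> real^'x) \<Rightarrow> real^'u"

definition wavg :: "nat \<Rightarrow> (nat \<Rightarrow> real) \<Rightarrow> (nat \<Rightarrow> 'a::real_vector) \<Rightarrow> 'a" where
  "wavg n a f = (\<Sum>k\<in>{1..n}. a k *\<^sub>R f k)"

definition next_state ::
  "('x::finite,'u::finite) lqm \<Rightarrow> nat \<Rightarrow> (nat \<Rightarrow> real) \<Rightarrow> ('x,'u) strat \<Rightarrow> (nat \<Rightarrow> nat \<Rightarrow> real^'x)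
   \<Rightarrow> nat \<Rightarrow> (nat \<Rightarrow> nat \<Rightarrow> real^'x) \<Rightarrow> nat \<Rightarrow> real^'x" where
  "next_state m n a g w t H j =
     mA m t *v H t j + mB m t *v g j t H + mAb m t *v wavg n a (H t)
     + mBb m t *v wavg n a (\<lambda>k. g k t H) + w t j"

primrec hist ::
  "('x::finite,'u::finite) lqm \<Rightarrow> nat \<Rightarrow> (nat \<Rightarrow> real) \<Rightarrow> ('x,'u) strat \<Rightarrow> (nat \<Rightarrow> real^'x)
   \<Rightarrow> (nat \<Rightarrow> nat \<Rightarrow> real^'x) \<Rightarrow> nat \<Rightarrow> nat \<Rightarrow> nat \<Rightarrow> real^'x" where
  "hist m n a g x1 w 0 = (\<lambda>s j. 0)"
| "hist m n a g x1 w (Suc t) =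
     (\<lambda>s j. if s \<le> t then hist m n a g x1 w t s j
            else if s = Suc t \<and> j \<in> {1..n} then
              (if t = 0 then x1 j else next_state m n a g w t (hist m n a g x1 w t) j)
            else 0)"

definition stage_cost ::
  "('x::finite,'u::finite) lqm \<Rightarrow> nat \<Rightarrow> (nat \<Rightarrow> real) \<Rightarrow> nat \<Rightarrow> nat
   \<Rightarrow> (nat \<Rightarrow> real^'x) \<Rightarrow> (nat \<Rightarrow> real^'u) \<Rightarrow> real" where
  "stage_cost m n a t i X U =
     (let xb = wavg n a X; ub = wavg n a U in
       X i \<bullet> (mQ m t *v X i) + 2 * (X i \<bullet> (mSx m t *v xb)) + xb \<bullet> (mQb m t *v xb)
     + U i \<bullet> (mR m t *v U i) + 2 * (U i \<bullet> (mSu m t *v ub)) + ub \<bullet> (mRb m t *v ub)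
     + (\<Sum>j\<in>{1..n}. a j * (X j \<bullet> (mGx m t *v X j) + U j \<bullet> (mGu m t *v U j))))"

definition cost_from ::
  "('x::finite,'u::finite) lqm \<Rightarrow> nat \<Rightarrow> nat \<Rightarrow> (nat \<Rightarrow> real) \<Rightarrow> ('x,'u) strat \<Rightarrow> (nat \<Rightarrow> real^'x)
   \<Rightarrow> (nat \<Rightarrow> nat \<Rightarrow> real^'x) \<Rightarrow> nat \<Rightarrow> nat \<Rightarrow> real" where
  "cost_from m T n a g x1 w t0 i =
     (\<Sum>t\<in>{t0..T}. stage_cost m n a t i (\<lambda>j. hist m n a g x1 w t t j)
                                        (\<lambda>j. g j t (hist m n a g x1 w t)))"

definition rcost ::
  "('x::finite,'u::finite) lqm \<Rightarrow> nat \<Rightarrow> nat \<Rightarrow> (nat \<Rightarrow> real) \<Rightarrow> (nat \<Rightarrow> 'w \<Rightarrow> real^'x)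
   \<Rightarrow> (nat \<Rightarrow> nat \<Rightarrow> 'w \<Rightarrow> real^'x) \<Rightarrow> ('x,'u) strat \<Rightarrow> nat \<Rightarrow> nat \<Rightarrow> 'w \<Rightarrow> real" where
  "rcost m T n a x1 w g t0 i \<omega> = cost_from m T n a g (\<lambda>j. x1 j \<omega>) (\<lambda>t j. w t j \<omega>) t0 i"

definition Jcost ::
  "('x::finite,'u::finite) lqm \<Rightarrow> nat \<Rightarrow> nat \<Rightarrow> (nat \<Rightarrow> real) \<Rightarrow> 'w measure \<Rightarrow> (nat \<Rightarrow> 'w \<Rightarrow> real^'x)
   \<Rightarrow> (nat \<Rightarrow> nat \<Rightarrow> 'w \<Rightarrow> real^'x) \<Rightarrow> ('x,'u) strat \<Rightarrow> nat \<Rightarrow> nat \<Rightarrow> real" where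
  "Jcost m T n a M x1 w g t0 i = (\<integral>\<omega>. rcost m T n a x1 w g t0 i \<omega> \<partial>M)"

definition is_SPNE ::
  "('x::finite,'u::finite) lqm \<Rightarrow> nat \<Rightarrow> nat \<Rightarrow> (nat \<Rightarrow> real) \<Rightarrow> 'w measure \<Rightarrow> (nat \<Rightarrow> 'w \<Rightarrow> real^'x)
   \<Rightarrow> (nat \<Rightarrow> nat \<Rightarrow> 'w \<Rightarrow> real^'x) \<Rightarrow> ('x,'u) strat \<Rightarrow> bool" where
  "is_SPNE m T n a M x1 w g \<longleftrightarrow>
     (\<forall>t0\<in>{1..T}. \<forall>i\<in>{1..n}.
        integrable M (rcost m T n a x1 w g t0 i) \<and>
        (\<forall>h. (\<forall>t<t0. h t = g i t) \<longrightarrow> integrable M (rcost m T n a x1 w (g(i := h)) t0 i) \<longrightarrow>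
             Jcost m T n a M x1 w g t0 i \<le> Jcost m T n a M x1 w (g(i := h)) t0 i))"

definition lin_profile :: "nat \<Rightarrow> (nat \<Rightarrow> real) \<Rightarrow> (nat \<Rightarrow> real^'x^'u) \<Rightarrow> (nat \<Rightarrow> real^'x^'u)
   \<Rightarrow> ('x::finite,'u::finite) strat" where
  "lin_profile n a th thb = (\<lambda>i t H. th t *v H t i + (thb t - th t) *v wavg n a (H t))"

definition noshare_profile :: "(nat \<Rightarrow> real^'x^'u) \<Rightarrow> (nat \<Rightarrow> real^'x^'u) \<Rightarrow> (nat \<Rightarrow> real^'x)
   \<Rightarrow> ('x::finite,'u::finite) strat" where
  "noshare_profile th thb z = (\<lambda>i t H. th t *v H t i + (thb t - th t) *v z t)"

primrec zpred :: "('x::finite,'u::finite) lqm \<Rightarrow> (nat \<Rightarrow> real^'x^'u) \<Rightarrow> real^'x \<Rightarrow> nat \<Rightarrow> real^'x" where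
  "zpred m thb z1 0 = 0"
| "zpred m thb z1 (Suc t) =
     (if t = 0 then z1 else (mA m t + mAb m t + (mB m t + mBb m t) ** thb t) *v zpred m thb z1 t)"

definition init_mean :: "nat \<Rightarrow> (nat \<Rightarrow> real) \<Rightarrow> 'w measure \<Rightarrow> (nat \<Rightarrow> 'w \<Rightarrow> real^'x::finite) \<Rightarrow> real^'x" where
  "init_mean n a M x1 = wavg n a (\<lambda>i. \<integral>\<omega>. x1 i \<omega> \<partial>M)"

definition gapJ ::
  "('x::finite,'u::finite) lqm \<Rightarrow> nat \<Rightarrow> nat \<Rightarrow> (nat \<Rightarrow> real) \<Rightarrow> 'w measure \<Rightarrow> (nat \<Rightarrow> 'w \<Rightarrow> real^'x)
   \<Rightarrow> (nat \<Rightarrow> nat \<Rightarrow> 'w \<Rightarrow> real^'x) \<Rightarrow> ('x,'u) strat \<Rightarrow> ('x,'u) strat \<Rightarrow> nat \<Rightarrow> real" where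
  "gapJ m T n a M x1 w g1 g2 t0 =
     Max ((\<lambda>i. \<bar>Jcost m T n a M x1 w g1 t0 i - Jcost m T n a M x1 w g2 t0 i\<bar>) ` {1..n})"

definition prim_rv :: "(nat \<Rightarrow> 'w \<Rightarrow> 'v) \<Rightarrow> (nat \<Rightarrow> nat \<Rightarrow> 'w \<Rightarrow> 'v) \<Rightarrow> nat \<times> nat \<Rightarrow> 'w \<Rightarrow> 'v" where
  "prim_rv x1 w = (\<lambda>(t, i). if t = 0 then x1 i else w t i)"

end

theory Submission
  imports Defs
begin

(* The equilibrium profile feeds back the empirical mean field xbar_t, the no-sharing
   profiles feed back its deterministic prediction z_t instead.  By induction on t, all
   states, mean fields and actions have second moments bounded uniformly in the player,
   while the differences between the two state processes and the deviations of both
   empirical mean fields from z_t have second moments tending to 0 as n grows: such a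
   deviation evolves by the linear mean-field dynamics, driven by the gap between the gains
   and by the weighted average of the independent centred noises, and with weights of
   size O(1/n) that average has second moment O(1/n).  As the stage cost is a sum of
   bilinear forms, mean-square closeness of mean-square bounded quantities gives closeness
   of the realised costs in L1, uniformly in the player; hence the largest gap between
   the expected costs tends to 0. *)

lemma norm_matrix_vector_mult_le:
  fixes A :: "real^'n^'m"
  shows "norm (A *v x) \<le> norm A * norm x"
proof -
  have row: "\<bar>(A *v x) $ i\<bar> \<le> norm (A $ i) * norm x" for i
    by (metis Cauchy_Schwarz_ineq2 matrix_vector_mul_component)
  have "(norm (A *v x))\<^sup>2 = (\<Sum>i\<in>UNIV. ((A *v x) $ i)\<^sup>2)"
    by (simp add: norm_vec_def L2_set_def sum_nonneg)
  also have "\<dots> \<le> (\<Sum>i\<in>UNIV. (norm (A $ i) * norm x)\<^sup>2)"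
    by (intro sum_mono) (metis abs_ge_zero power2_abs power_mono row)
  also have "\<dots> = (norm A * norm x)\<^sup>2"
    by (simp add: norm_vec_def L2_set_def sum_nonneg power_mult_distrib sum_distrib_right)
  finally show ?thesis
    by (meson mult_nonneg_nonneg norm_ge_zero power2_le_imp_le)
qed

lemma abs_inner_matrix_vector_mult_le:
  fixes Q :: "real^'n^'m"
  shows "\<bar>u \<bullet> (Q *v v)\<bar> \<le> norm Q * (norm u * norm v)"
proof -
  have "\<bar>u \<bullet> (Q *v v)\<bar> \<le> norm u * norm (Q *v v)" by (rule Cauchy_Schwarz_ineq2)
  also have "\<dots> \<le> norm u * (norm Q * norm v)"
    by (intro mult_left_mono norm_matrix_vector_mult_le) simp
  finally show ?thesis by (simp add: algebra_simps)
qed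

lemma abs_inner_matrix_vector_mult_diff_le:
  fixes Q :: "real^'n^'m"
  shows "\<bar>x \<bullet> (Q *v y) - x' \<bullet> (Q *v y')\<bar>
    \<le> norm Q * (norm (x - x') * norm y + norm (y - y') * norm x')"
proof -
  have "x \<bullet> (Q *v y) - x' \<bullet> (Q *v y') = (x - x') \<bullet> (Q *v y) + x' \<bullet> (Q *v (y - y'))"
    by (simp add: algebra_simps inner_diff_left inner_diff_right)
  also have "\<bar>\<dots>\<bar> \<le> norm Q * (norm (x - x') * norm y) + norm Q * (norm x' * norm (y - y'))"
    by (intro order_trans[OF abs_triangle_ineq] add_mono abs_inner_matrix_vector_mult_le)
  finally show ?thesis
    by (simp add: algebra_simps)
qed

lemma power2_norm_add_le:
  fixes a b :: "'a::real_normed_vector"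
  shows "(norm (a + b))\<^sup>2 \<le> 2 * (norm a)\<^sup>2 + 2 * (norm b)\<^sup>2"
proof -
  have "(norm (a + b))\<^sup>2 \<le> (norm a + norm b)\<^sup>2"
    by (simp add: norm_triangle_ineq power_mono)
  also have "\<dots> \<le> 2 * (norm a)\<^sup>2 + 2 * (norm b)\<^sup>2"
    by (smt (verit) sum_squares_bound power2_sum)
  finally show ?thesis .
qed

lemma mult_le_weighted_squares:
  fixes x y e :: real
  assumes "0 < e"
  shows "x * y \<le> (x\<^sup>2 / e + e * y\<^sup>2) / 2"
proof -
  have "2 * e * (x * y) \<le> x\<^sup>2 + e\<^sup>2 * y\<^sup>2"
    using zero_le_power2[of "x - e * y"] by (simp add: power2_eq_square algebra_simps)
  then show ?thesis
    using assms by (simp add: field_simps power2_eq_square)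
qed

lemma integrable_abs_integral_le:
  fixes f g :: "'w \<Rightarrow> real"
  assumes f: "integrable P f" and g: "g \<in> borel_measurable P"
    and le: "\<And>\<omega>. \<omega> \<in> space P \<Longrightarrow> \<bar>g \<omega>\<bar> \<le> f \<omega>"
  shows "integrable P g" and "(\<integral>\<omega>. \<bar>g \<omega>\<bar> \<partial>P) \<le> (\<integral>\<omega>. f \<omega> \<partial>P)"
proof -
  show gi: "integrable P g"
    using le by (intro Bochner_Integration.integrable_bound[OF f g] AE_I2)
      (auto intro: order_trans[OF _ abs_ge_self])
  show "(\<integral>\<omega>. \<bar>g \<omega>\<bar> \<partial>P) \<le> (\<integral>\<omega>. f \<omega> \<partial>P)"
    using le gi f by (intro integral_mono) auto
qed

lemma power2_norm_mult_le_bound: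
  fixes x :: "'a::real_normed_vector"
  assumes "norm x \<le> K"
  shows "(norm x)\<^sup>2 * v \<le> K\<^sup>2 * \<bar>v\<bar>"
proof -
  have "(norm x)\<^sup>2 * v \<le> (norm x)\<^sup>2 * \<bar>v\<bar>"
    by (intro mult_left_mono) auto
  also have "\<dots> \<le> K\<^sup>2 * \<bar>v\<bar>"
    using assms by (intro mult_right_mono power_mono) auto
  finally show ?thesis .
qed

section \<open>Second moments of sums of independent random vectors\<close>

context prob_space
begin

lemma indep_var_of_indep_vars:
  assumes indep: "indep_vars (\<lambda>_. borel) X I" and ij: "i \<in> I" "j \<in> I" "i \<noteq> j"
    and f: "f \<in> borel_measurable borel" and g: "g \<in> borel_measurable borel"
  shows "indep_var borel (\<lambda>\<omega>. f (X i \<omega>)) borel (\<lambda>\<omega>. g (X j \<omega>))"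
proof -
  have restricted: "indep_var (PiM {i} (\<lambda>_. borel)) (\<lambda>\<omega>. restrict (\<lambda>k. X k \<omega>) {i})
                  (PiM {j} (\<lambda>_. borel)) (\<lambda>\<omega>. restrict (\<lambda>k. X k \<omega>) {j})"
    using ij by (intro indep_var_restrict[OF indep]) auto
  have f': "(\<lambda>x. f (x i)) \<in> measurable (PiM {i} (\<lambda>_. borel)) borel"
    by (rule measurable_compose[OF _ f]) (rule measurable_component_singleton, simp)
  have g': "(\<lambda>x. g (x j)) \<in> measurable (PiM {j} (\<lambda>_. borel)) borel"
    by (rule measurable_compose[OF _ g]) (rule measurable_component_singleton, simp)
  from indep_var_compose[OF restricted f' g'] show ?thesis
    by (simp add: comp_def)
qed

lemma indep_var_inner:
  fixes X Y :: "'a \<Rightarrow> 'b::euclidean_space"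
  assumes indep: "indep_var borel X borel Y" and X: "integrable M X" and Y: "integrable M Y"
  shows "integrable M (\<lambda>\<omega>. X \<omega> \<bullet> Y \<omega>)"
    and "(\<integral>\<omega>. X \<omega> \<bullet> Y \<omega> \<partial>M) = (\<integral>\<omega>. X \<omega> \<partial>M) \<bullet> (\<integral>\<omega>. Y \<omega> \<partial>M)"
proof -
  have "indep_var borel (\<lambda>\<omega>. X \<omega> \<bullet> b) borel (\<lambda>\<omega>. Y \<omega> \<bullet> b)" for b
    using indep_var_compose[OF indep, of "\<lambda>x. x \<bullet> b" borel "\<lambda>x. x \<bullet> b" borel]
    by (simp add: comp_def)
  note components = indep_var_integrable[OF this] indep_var_lebesgue_integral[OF this]
  have inner: "X \<omega> \<bullet> Y \<omega> = (\<Sum>b\<in>Basis. (X \<omega> \<bullet> b) * (Y \<omega> \<bullet> b))" for \<omega>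
    by (rule euclidean_inner)
  show "integrable M (\<lambda>\<omega>. X \<omega> \<bullet> Y \<omega>)"
    unfolding inner using components(1) X Y by auto
  have "(\<integral>\<omega>. X \<omega> \<bullet> Y \<omega> \<partial>M) = (\<Sum>b\<in>Basis. (\<integral>\<omega>. X \<omega> \<bullet> b \<partial>M) * (\<integral>\<omega>. Y \<omega> \<bullet> b \<partial>M))"
    unfolding inner using components X Y by (simp add: integral_sum)
  also have "\<dots> = (\<Sum>b\<in>Basis. ((\<integral>\<omega>. X \<omega> \<partial>M) \<bullet> b) * ((\<integral>\<omega>. Y \<omega> \<partial>M) \<bullet> b))"
    using X Y by simp
  also have "\<dots> = (\<integral>\<omega>. X \<omega> \<partial>M) \<bullet> (\<integral>\<omega>. Y \<omega> \<partial>M)"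
    by (rule euclidean_inner[symmetric])
  finally show "(\<integral>\<omega>. X \<omega> \<bullet> Y \<omega> \<partial>M) = (\<integral>\<omega>. X \<omega> \<partial>M) \<bullet> (\<integral>\<omega>. Y \<omega> \<partial>M)" .
qed

lemma integral_norm_sum_pairwise_indep:
  fixes Z :: "'i \<Rightarrow> 'a \<Rightarrow> 'b::euclidean_space"
  assumes S: "finite S"
    and sq: "\<And>j. j \<in> S \<Longrightarrow> integrable M (\<lambda>\<omega>. (norm (Z j \<omega>))\<^sup>2)"
    and int: "\<And>j. j \<in> S \<Longrightarrow> integrable M (Z j)"
    and mean: "\<And>j. j \<in> S \<Longrightarrow> (\<integral>\<omega>. Z j \<omega> \<partial>M) = 0"
    and indep: "\<And>j k. j \<in> S \<Longrightarrow> k \<in> S \<Longrightarrow> j \<noteq> k \<Longrightarrow> indep_var borel (Z j) borel (Z k)"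
  shows "integrable M (\<lambda>\<omega>. (norm (\<Sum>j\<in>S. a j *\<^sub>R Z j \<omega>))\<^sup>2)"
    and "(\<integral>\<omega>. (norm (\<Sum>j\<in>S. a j *\<^sub>R Z j \<omega>))\<^sup>2 \<partial>M) = (\<Sum>j\<in>S. (a j)\<^sup>2 * (\<integral>\<omega>. (norm (Z j \<omega>))\<^sup>2 \<partial>M))"
proof -
  have cross: "integrable M (\<lambda>\<omega>. Z j \<omega> \<bullet> Z k \<omega>)
      \<and> (\<integral>\<omega>. Z j \<omega> \<bullet> Z k \<omega> \<partial>M) = (if j = k then \<integral>\<omega>. (norm (Z j \<omega>))\<^sup>2 \<partial>M else 0)"
    if "j \<in> S" "k \<in> S" for j k
  proof (cases "j = k")
    case True
    then show ?thesis
      using sq that by (simp add: power2_norm_eq_inner)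
  next
    case False
    then show ?thesis
      using indep_var_inner[OF indep int int] mean that by simp
  qed
  have expand: "(norm (\<Sum>j\<in>S. a j *\<^sub>R Z j \<omega>))\<^sup>2 = (\<Sum>j\<in>S. \<Sum>k\<in>S. a j * a k * (Z j \<omega> \<bullet> Z k \<omega>))" for \<omega>
    by (simp add: power2_norm_eq_inner inner_sum_left inner_sum_right sum_distrib_left
        inner_commute mult_ac)
  show "integrable M (\<lambda>\<omega>. (norm (\<Sum>j\<in>S. a j *\<^sub>R Z j \<omega>))\<^sup>2)"
    unfolding expand using cross by auto
  have "(\<integral>\<omega>. (norm (\<Sum>j\<in>S. a j *\<^sub>R Z j \<omega>))\<^sup>2 \<partial>M)
      = (\<Sum>j\<in>S. \<Sum>k\<in>S. a j * a k * (if j = k then \<integral>\<omega>. (norm (Z j \<omega>))\<^sup>2 \<partial>M else 0))"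
    unfolding expand using cross by (simp add: integral_sum)
  also have "\<dots> = (\<Sum>j\<in>S. a j * a j * (\<integral>\<omega>. (norm (Z j \<omega>))\<^sup>2 \<partial>M))"
    using S by (intro sum.cong refl) (simp add: if_distrib sum.delta' cong: if_cong)
  also have "\<dots> = (\<Sum>j\<in>S. (a j)\<^sup>2 * (\<integral>\<omega>. (norm (Z j \<omega>))\<^sup>2 \<partial>M))"
    by (simp add: power2_eq_square)
  finally show "(\<integral>\<omega>. (norm (\<Sum>j\<in>S. a j *\<^sub>R Z j \<omega>))\<^sup>2 \<partial>M) = (\<Sum>j\<in>S. (a j)\<^sup>2 * (\<integral>\<omega>. (norm (Z j \<omega>))\<^sup>2 \<partial>M))" .
qed

end

section \<open>Moment bounds uniform over growing populations\<close>

locale prob_space_sequence =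
  fixes M :: "nat \<Rightarrow> 'w measure"
  assumes eventually_prob_space: "\<forall>\<^sub>F n in sequentially. prob_space (M n)"
begin

definition L2_dominated :: "(nat \<Rightarrow> nat \<Rightarrow> 'w \<Rightarrow> 'a::euclidean_space) \<Rightarrow> (nat \<Rightarrow> real) \<Rightarrow> bool" where
  "L2_dominated F V \<longleftrightarrow> (\<forall>\<^sub>F n in sequentially. \<forall>i\<in>{1..n}. F n i \<in> borel_measurable (M n)
      \<and> integrable (M n) (\<lambda>\<omega>. (norm (F n i \<omega>))\<^sup>2) \<and> (\<integral>\<omega>. (norm (F n i \<omega>))\<^sup>2 \<partial>M n) \<le> V n)"

definition L2_bounded :: "(nat \<Rightarrow> nat \<Rightarrow> 'w \<Rightarrow> 'a::euclidean_space) \<Rightarrow> bool" where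
  "L2_bounded F \<longleftrightarrow> (\<exists>K. L2_dominated F (\<lambda>_. K))"

definition L2_vanishing :: "(nat \<Rightarrow> nat \<Rightarrow> 'w \<Rightarrow> 'a::euclidean_space) \<Rightarrow> bool" where
  "L2_vanishing F \<longleftrightarrow> (\<exists>V. V \<longlonglongrightarrow> 0 \<and> L2_dominated F V)"

definition L1_dominated :: "(nat \<Rightarrow> nat \<Rightarrow> 'w \<Rightarrow> real) \<Rightarrow> (nat \<Rightarrow> real) \<Rightarrow> bool" where
  "L1_dominated f W \<longleftrightarrow> (\<forall>\<^sub>F n in sequentially. \<forall>i\<in>{1..n}.
      integrable (M n) (f n i) \<and> (\<integral>\<omega>. \<bar>f n i \<omega>\<bar> \<partial>M n) \<le> W n)"

definition L1_vanishing :: "(nat \<Rightarrow> nat \<Rightarrow> 'w \<Rightarrow> real) \<Rightarrow> bool" where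
  "L1_vanishing f \<longleftrightarrow> (\<exists>W. W \<longlonglongrightarrow> 0 \<and> L1_dominated f W)"

lemma L2_dominated_mono:
  assumes "L2_dominated F V" and "\<forall>\<^sub>F n in sequentially. V n \<le> V' n"
  shows "L2_dominated F V'"
  using assms unfolding L2_dominated_def by eventually_elim force

lemma L2_dominated_cong:
  assumes "L2_dominated F V" and "\<forall>\<^sub>F n in sequentially. \<forall>i\<in>{1..n}. \<forall>\<omega>. G n i \<omega> = F n i \<omega>"
  shows "L2_dominated G V"
  using assms unfolding L2_dominated_def by eventually_elim (auto simp flip: fun_eq_iff)

lemma L2_dominated_add:
  assumes "L2_dominated F V" and "L2_dominated G W"
  shows "L2_dominated (\<lambda>n i \<omega>. F n i \<omega> + G n i \<omega>) (\<lambda>n. 2 * V n + 2 * W n)"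
  using assms unfolding L2_dominated_def
proof eventually_elim
  case (elim n)
  show ?case
  proof
    fix i assume "i \<in> {1..n}"
    with elim have F: "F n i \<in> borel_measurable (M n)" "integrable (M n) (\<lambda>\<omega>. (norm (F n i \<omega>))\<^sup>2)"
        "(\<integral>\<omega>. (norm (F n i \<omega>))\<^sup>2 \<partial>M n) \<le> V n"
      and G: "G n i \<in> borel_measurable (M n)" "integrable (M n) (\<lambda>\<omega>. (norm (G n i \<omega>))\<^sup>2)"
        "(\<integral>\<omega>. (norm (G n i \<omega>))\<^sup>2 \<partial>M n) \<le> W n"
      by auto
    have dom: "integrable (M n) (\<lambda>\<omega>. 2 * (norm (F n i \<omega>))\<^sup>2 + 2 * (norm (G n i \<omega>))\<^sup>2)"
      using F G by auto
    have meas: "(\<lambda>\<omega>. F n i \<omega> + G n i \<omega>) \<in> borel_measurable (M n)"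
      using F G by measurable
    then have "(\<lambda>\<omega>. (norm (F n i \<omega> + G n i \<omega>))\<^sup>2) \<in> borel_measurable (M n)"
      by measurable
    note bound = integrable_abs_integral_le[OF dom this, simplified, OF power2_norm_add_le]
    have "(\<integral>\<omega>. (norm (F n i \<omega> + G n i \<omega>))\<^sup>2 \<partial>M n)
        \<le> 2 * (\<integral>\<omega>. (norm (F n i \<omega>))\<^sup>2 \<partial>M n) + 2 * (\<integral>\<omega>. (norm (G n i \<omega>))\<^sup>2 \<partial>M n)"
      using bound(2) F G by simp
    with meas bound(1) F G
    show "(\<lambda>\<omega>. F n i \<omega> + G n i \<omega>) \<in> borel_measurable (M n)
        \<and> integrable (M n) (\<lambda>\<omega>. (norm (F n i \<omega> + G n i \<omega>))\<^sup>2)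
        \<and> (\<integral>\<omega>. (norm (F n i \<omega> + G n i \<omega>))\<^sup>2 \<partial>M n) \<le> 2 * V n + 2 * W n"
      by auto
  qed
qed

lemma L2_dominated_uminus:
  assumes "L2_dominated F V"
  shows "L2_dominated (\<lambda>n i \<omega>. - F n i \<omega>) V"
  using assms unfolding L2_dominated_def by simp

lemma L2_dominated_matrix_mult:
  fixes C :: "nat \<Rightarrow> real^'n^'m" and F :: "nat \<Rightarrow> nat \<Rightarrow> 'w \<Rightarrow> real^'n"
  assumes "L2_dominated F V"
  shows "L2_dominated (\<lambda>n i \<omega>. C n *v F n i \<omega>) (\<lambda>n. (norm (C n))\<^sup>2 * V n)"
  using assms unfolding L2_dominated_def
proof eventually_elim
  case (elim n)
  show ?case
  proof
    fix i assume "i \<in> {1..n}"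
    with elim have F: "F n i \<in> borel_measurable (M n)" "integrable (M n) (\<lambda>\<omega>. (norm (F n i \<omega>))\<^sup>2)"
        "(\<integral>\<omega>. (norm (F n i \<omega>))\<^sup>2 \<partial>M n) \<le> V n"
      by auto
    have dom: "integrable (M n) (\<lambda>\<omega>. (norm (C n))\<^sup>2 * (norm (F n i \<omega>))\<^sup>2)"
      using F by auto
    have meas: "(\<lambda>\<omega>. C n *v F n i \<omega>) \<in> borel_measurable (M n)"
      using F(1)
      by (intro borel_measurable_continuous_on[OF matrix_vector_mult_linear_continuous_on])
    then have "(\<lambda>\<omega>. (norm (C n *v F n i \<omega>))\<^sup>2) \<in> borel_measurable (M n)"
      by measurable
    note bound = integrable_abs_integral_le[OF dom this]
    have le: "\<bar>(norm (C n *v x))\<^sup>2\<bar> \<le> (norm (C n))\<^sup>2 * (norm x)\<^sup>2" for x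
      by (simp add: power_mono norm_matrix_vector_mult_le flip: power_mult_distrib)
    have "(\<integral>\<omega>. (norm (C n *v F n i \<omega>))\<^sup>2 \<partial>M n) \<le> (norm (C n))\<^sup>2 * (\<integral>\<omega>. (norm (F n i \<omega>))\<^sup>2 \<partial>M n)"
      using bound(2)[OF le] by simp
    also have "\<dots> \<le> (norm (C n))\<^sup>2 * V n"
      using F(3) by (intro mult_left_mono) auto
    finally show "(\<lambda>\<omega>. C n *v F n i \<omega>) \<in> borel_measurable (M n)
        \<and> integrable (M n) (\<lambda>\<omega>. (norm (C n *v F n i \<omega>))\<^sup>2)
        \<and> (\<integral>\<omega>. (norm (C n *v F n i \<omega>))\<^sup>2 \<partial>M n) \<le> (norm (C n))\<^sup>2 * V n"
      using meas bound(1)[OF le] by simp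
  qed
qed

lemma L2_dominated_const: "L2_dominated (\<lambda>n i \<omega>. c n) (\<lambda>n. (norm (c n))\<^sup>2)"
  using eventually_prob_space unfolding L2_dominated_def
proof eventually_elim
  case (elim n)
  then interpret prob_space "M n" .
  show ?case by (simp add: prob_space)
qed

lemma L2_bounded_cong:
  "L2_bounded F \<Longrightarrow> \<forall>\<^sub>F n in sequentially. \<forall>i\<in>{1..n}. \<forall>\<omega>. G n i \<omega> = F n i \<omega> \<Longrightarrow> L2_bounded G"
  unfolding L2_bounded_def using L2_dominated_cong by blast

lemma L2_vanishing_cong:
  "L2_vanishing F \<Longrightarrow> \<forall>\<^sub>F n in sequentially. \<forall>i\<in>{1..n}. \<forall>\<omega>. G n i \<omega> = F n i \<omega> \<Longrightarrow> L2_vanishing G"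
  unfolding L2_vanishing_def using L2_dominated_cong by blast

lemma L2_bounded_add:
  assumes "L2_bounded F" and "L2_bounded G"
  shows "L2_bounded (\<lambda>n i \<omega>. F n i \<omega> + G n i \<omega>)"
proof -
  obtain K K' where "L2_dominated F (\<lambda>_. K)" "L2_dominated G (\<lambda>_. K')"
    using assms unfolding L2_bounded_def by blast
  from L2_dominated_add[OF this] show ?thesis
    unfolding L2_bounded_def by blast
qed

lemma L2_vanishing_add:
  assumes "L2_vanishing F" and "L2_vanishing G"
  shows "L2_vanishing (\<lambda>n i \<omega>. F n i \<omega> + G n i \<omega>)"
proof -
  obtain V W where "V \<longlonglongrightarrow> 0" "W \<longlonglongrightarrow> 0" "L2_dominated F V" "L2_dominated G W"
    using assms unfolding L2_vanishing_def by blast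
  then show ?thesis
    unfolding L2_vanishing_def
    by (intro exI[of _ "\<lambda>n. 2 * V n + 2 * W n"] conjI L2_dominated_add tendsto_add_zero
        tendsto_mult_right_zero)
qed

lemma L2_bounded_uminus: "L2_bounded F \<Longrightarrow> L2_bounded (\<lambda>n i \<omega>. - F n i \<omega>)"
  unfolding L2_bounded_def using L2_dominated_uminus by blast

lemma L2_vanishing_uminus: "L2_vanishing F \<Longrightarrow> L2_vanishing (\<lambda>n i \<omega>. - F n i \<omega>)"
  unfolding L2_vanishing_def using L2_dominated_uminus by blast

lemma L2_bounded_diff:
  "L2_bounded F \<Longrightarrow> L2_bounded G \<Longrightarrow> L2_bounded (\<lambda>n i \<omega>. F n i \<omega> - G n i \<omega>)"
  using L2_bounded_add[OF _ L2_bounded_uminus, of F G] by simp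

lemma L2_vanishing_diff:
  "L2_vanishing F \<Longrightarrow> L2_vanishing G \<Longrightarrow> L2_vanishing (\<lambda>n i \<omega>. F n i \<omega> - G n i \<omega>)"
  using L2_vanishing_add[OF _ L2_vanishing_uminus, of F G] by simp

lemma L2_vanishing_imp_bounded:
  assumes "L2_vanishing F"
  shows "L2_bounded F"
proof -
  obtain V where V: "V \<longlonglongrightarrow> 0" and dom: "L2_dominated F V"
    using assms unfolding L2_vanishing_def by blast
  have "\<forall>\<^sub>F n in sequentially. V n \<le> 1"
    using order_tendstoD(2)[OF V, of 1] by (auto elim: eventually_mono)
  then have "L2_dominated F (\<lambda>_. 1)"
    by (rule L2_dominated_mono[OF dom])
  then show ?thesis
    unfolding L2_bounded_def by blast
qed

lemma L2_bounded_const: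
  assumes "Bseq c"
  shows "L2_bounded (\<lambda>n i \<omega>. c n)"
proof -
  obtain K where "\<And>n. norm (c n) \<le> K"
    using assms unfolding Bseq_def by blast
  then have "L2_dominated (\<lambda>n i \<omega>. c n) (\<lambda>_. K\<^sup>2)"
    by (intro L2_dominated_mono[OF L2_dominated_const] always_eventually allI power_mono) auto
  then show ?thesis
    unfolding L2_bounded_def by blast
qed

lemma L2_vanishing_const:
  assumes "c \<longlonglongrightarrow> 0"
  shows "L2_vanishing (\<lambda>n i \<omega>. c n)"
  unfolding L2_vanishing_def
  by (intro exI[of _ "\<lambda>n. (norm (c n))\<^sup>2"] conjI L2_dominated_const)
     (use tendsto_power[OF tendsto_norm_zero[OF assms], of 2] in simp)
lemma L2_bounded_matrix_mult:
  fixes C :: "nat \<Rightarrow> real^'n^'m" and F :: "nat \<Rightarrow> nat \<Rightarrow> 'w \<Rightarrow> real^'n"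
  assumes "Bseq C" and "L2_bounded F"
  shows "L2_bounded (\<lambda>n i \<omega>. C n *v F n i \<omega>)"
proof -
  obtain K where K: "\<And>n. norm (C n) \<le> K"
    using assms(1) unfolding Bseq_def by blast
  obtain V where "L2_dominated F (\<lambda>_. V)"
    using assms(2) unfolding L2_bounded_def by blast
  then have "L2_dominated (\<lambda>n i \<omega>. C n *v F n i \<omega>) (\<lambda>_. K\<^sup>2 * \<bar>V\<bar>)"
    by (rule L2_dominated_mono[OF L2_dominated_matrix_mult])
       (intro always_eventually allI power2_norm_mult_le_bound K)
  then show ?thesis
    unfolding L2_bounded_def by blast
qed

lemma L2_vanishing_matrix_mult:
  fixes C :: "nat \<Rightarrow> real^'n^'m" and F :: "nat \<Rightarrow> nat \<Rightarrow> 'w \<Rightarrow> real^'n"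
  assumes "Bseq C" and "L2_vanishing F"
  shows "L2_vanishing (\<lambda>n i \<omega>. C n *v F n i \<omega>)"
proof -
  obtain K where K: "\<And>n. norm (C n) \<le> K"
    using assms(1) unfolding Bseq_def by blast
  obtain V where V: "V \<longlonglongrightarrow> 0" and dom: "L2_dominated F V"
    using assms(2) unfolding L2_vanishing_def by blast
  have "L2_dominated (\<lambda>n i \<omega>. C n *v F n i \<omega>) (\<lambda>n. K\<^sup>2 * \<bar>V n\<bar>)"
    by (rule L2_dominated_mono[OF L2_dominated_matrix_mult[OF dom]])
       (intro always_eventually allI power2_norm_mult_le_bound K)
  moreover have "(\<lambda>n. K\<^sup>2 * \<bar>V n\<bar>) \<longlonglongrightarrow> 0"
    by (intro tendsto_mult_right_zero tendsto_rabs_zero V)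
  ultimately show ?thesis
    unfolding L2_vanishing_def by blast
qed

lemma L2_vanishing_matrix_mult_tendsto_zero:
  fixes C :: "nat \<Rightarrow> real^'n^'m" and F :: "nat \<Rightarrow> nat \<Rightarrow> 'w \<Rightarrow> real^'n"
  assumes "C \<longlonglongrightarrow> 0" and "L2_bounded F"
  shows "L2_vanishing (\<lambda>n i \<omega>. C n *v F n i \<omega>)"
proof -
  obtain V where "L2_dominated F (\<lambda>_. V)"
    using assms(2) unfolding L2_bounded_def by blast
  then have "L2_dominated (\<lambda>n i \<omega>. C n *v F n i \<omega>) (\<lambda>n. (norm (C n))\<^sup>2 * \<bar>V\<bar>)"
    by (rule L2_dominated_mono[OF L2_dominated_matrix_mult])
       (intro always_eventually allI mult_left_mono; simp)
  moreover have "(\<lambda>n. (norm (C n))\<^sup>2 * \<bar>V\<bar>) \<longlonglongrightarrow> 0"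
    using tendsto_power[OF tendsto_norm_zero[OF assms(1)], of 2]
    by (simp add: tendsto_mult_left_zero)
  ultimately show ?thesis
    unfolding L2_vanishing_def by blast
qed

lemma L1_vanishing_cong:
  assumes "L1_vanishing f" and "\<forall>\<^sub>F n in sequentially. \<forall>i\<in>{1..n}. \<forall>\<omega>. g n i \<omega> = f n i \<omega>"
  shows "L1_vanishing g"
proof -
  have "L1_dominated g W" if "L1_dominated f W" for W
    using that assms(2) unfolding L1_dominated_def by eventually_elim (auto simp flip: fun_eq_iff)
  with assms(1) show ?thesis
    unfolding L1_vanishing_def by blast
qed

lemma L1_dominated_add:
  assumes "L1_dominated f W" and "L1_dominated g W'"
  shows "L1_dominated (\<lambda>n i \<omega>. f n i \<omega> + g n i \<omega>) (\<lambda>n. W n + W' n)"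
  using assms unfolding L1_dominated_def
proof eventually_elim
  case (elim n)
  show ?case
  proof
    fix i assume "i \<in> {1..n}"
    with elim have f: "integrable (M n) (f n i)" "(\<integral>\<omega>. \<bar>f n i \<omega>\<bar> \<partial>M n) \<le> W n"
      and g: "integrable (M n) (g n i)" "(\<integral>\<omega>. \<bar>g n i \<omega>\<bar> \<partial>M n) \<le> W' n"
      by auto
    have "(\<integral>\<omega>. \<bar>f n i \<omega> + g n i \<omega>\<bar> \<partial>M n) \<le> (\<integral>\<omega>. \<bar>f n i \<omega>\<bar> + \<bar>g n i \<omega>\<bar> \<partial>M n)"
      using f g by (intro integral_mono abs_triangle_ineq) auto
    also have "\<dots> \<le> W n + W' n"
      using f g by simp
    finally show "integrable (M n) (\<lambda>\<omega>. f n i \<omega> + g n i \<omega>)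
        \<and> (\<integral>\<omega>. \<bar>f n i \<omega> + g n i \<omega>\<bar> \<partial>M n) \<le> W n + W' n"
      using f g by simp
  qed
qed

lemma L1_vanishing_add:
  assumes "L1_vanishing f" and "L1_vanishing g"
  shows "L1_vanishing (\<lambda>n i \<omega>. f n i \<omega> + g n i \<omega>)"
proof -
  obtain W W' where "W \<longlonglongrightarrow> 0" "W' \<longlonglongrightarrow> 0" "L1_dominated f W" "L1_dominated g W'"
    using assms unfolding L1_vanishing_def by blast
  then show ?thesis
    unfolding L1_vanishing_def
    by (intro exI[of _ "\<lambda>n. W n + W' n"] conjI tendsto_add_zero L1_dominated_add)
qed

lemma L1_vanishing_cmult:
  assumes "L1_vanishing f"
  shows "L1_vanishing (\<lambda>n i \<omega>. c * f n i \<omega>)"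
proof -
  obtain W where W: "W \<longlonglongrightarrow> 0" and dom: "L1_dominated f W"
    using assms unfolding L1_vanishing_def by blast
  have "L1_dominated (\<lambda>n i \<omega>. c * f n i \<omega>) (\<lambda>n. \<bar>c\<bar> * W n)"
    using dom unfolding L1_dominated_def
    by eventually_elim (auto simp: abs_mult intro: mult_left_mono)
  moreover have "(\<lambda>n. \<bar>c\<bar> * W n) \<longlonglongrightarrow> 0"
    by (rule tendsto_mult_right_zero[OF W])
  ultimately show ?thesis
    unfolding L1_vanishing_def by blast
qed

lemma L1_vanishing_zero: "L1_vanishing (\<lambda>n i \<omega>. 0)"
  unfolding L1_vanishing_def L1_dominated_def by (intro exI[of _ "\<lambda>_. 0"]) auto

lemma L1_vanishing_sum:
  assumes "\<And>t. t \<in> S \<Longrightarrow> L1_vanishing (f t)"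
  shows "L1_vanishing (\<lambda>n i \<omega>. \<Sum>t\<in>S. f t n i \<omega>)"
  using assms
proof (induction S rule: infinite_finite_induct)
  case (insert t S)
  then show ?case
    using L1_vanishing_add[of "f t" "\<lambda>n i \<omega>. \<Sum>t\<in>S. f t n i \<omega>"] by simp
qed (simp_all add: L1_vanishing_zero)

lemma L1_vanishing_weighted_sum:
  assumes f: "L1_vanishing f" and a: "\<forall>\<^sub>F n in sequentially. (\<Sum>j\<in>{1..n}. \<bar>a n j\<bar>) \<le> G"
  shows "L1_vanishing (\<lambda>n i \<omega>. \<Sum>j\<in>{1..n}. a n j * f n j \<omega>)"
proof -
  obtain W where W: "W \<longlonglongrightarrow> 0" and dom: "L1_dominated f W"
    using f unfolding L1_vanishing_def by blast
  have "L1_dominated (\<lambda>n i \<omega>. \<Sum>j\<in>{1..n}. a n j * f n j \<omega>) (\<lambda>n. G * \<bar>W n\<bar>)"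
    using dom a unfolding L1_dominated_def
  proof eventually_elim
    case (elim n)
    then have f: "\<And>j. j \<in> {1..n} \<Longrightarrow> integrable (M n) (f n j)"
      and fW: "\<And>j. j \<in> {1..n} \<Longrightarrow> (\<integral>\<omega>. \<bar>f n j \<omega>\<bar> \<partial>M n) \<le> \<bar>W n\<bar>"
      by (fastforce intro: order_trans[OF _ abs_ge_self])+
    have sum_int: "integrable (M n) (\<lambda>\<omega>. \<Sum>j\<in>{1..n}. a n j * f n j \<omega>)"
      using f by auto
    have "(\<integral>\<omega>. \<bar>\<Sum>j\<in>{1..n}. a n j * f n j \<omega>\<bar> \<partial>M n)
        \<le> (\<integral>\<omega>. (\<Sum>j\<in>{1..n}. \<bar>a n j\<bar> * \<bar>f n j \<omega>\<bar>) \<partial>M n)"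
      using f sum_int by (intro integral_mono) (auto simp: abs_mult intro: order_trans[OF sum_abs])
    also have "\<dots> = (\<Sum>j\<in>{1..n}. \<bar>a n j\<bar> * (\<integral>\<omega>. \<bar>f n j \<omega>\<bar> \<partial>M n))"
      using f by (simp add: integral_sum)
    also have "\<dots> \<le> (\<Sum>j\<in>{1..n}. \<bar>a n j\<bar>) * \<bar>W n\<bar>"
      unfolding sum_distrib_right using fW by (intro sum_mono mult_left_mono) auto
    also have "\<dots> \<le> G * \<bar>W n\<bar>"
      using elim by (intro mult_right_mono) auto
    finally show ?case
      using sum_int by auto
  qed
  moreover have "(\<lambda>n. G * \<bar>W n\<bar>) \<longlonglongrightarrow> 0"
    by (intro tendsto_mult_right_zero tendsto_rabs_zero W)
  ultimately show ?thesis
    unfolding L1_vanishing_def by blast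
qed

lemma L1_vanishing_abs_le:
  assumes f: "L1_vanishing f"
    and le: "\<forall>\<^sub>F n in sequentially. \<forall>i\<in>{1..n}.
               g n i \<in> borel_measurable (M n) \<and> (\<forall>\<omega>. \<bar>g n i \<omega>\<bar> \<le> \<bar>f n i \<omega>\<bar>)"
  shows "L1_vanishing g"
proof -
  obtain W where W: "W \<longlonglongrightarrow> 0" and dom: "L1_dominated f W"
    using f unfolding L1_vanishing_def by blast
  have "L1_dominated g W"
    using dom le unfolding L1_dominated_def
  proof eventually_elim
    case (elim n)
    show ?case
    proof
      fix i assume "i \<in> {1..n}"
      with elim have f: "integrable (M n) (f n i)" "(\<integral>\<omega>. \<bar>f n i \<omega>\<bar> \<partial>M n) \<le> W n"
        and g: "g n i \<in> borel_measurable (M n)" "\<And>\<omega>. \<bar>g n i \<omega>\<bar> \<le> \<bar>f n i \<omega>\<bar>"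
        by auto
      note bound = integrable_abs_integral_le[OF integrable_abs[OF f(1)] g]
      show "integrable (M n) (g n i) \<and> (\<integral>\<omega>. \<bar>g n i \<omega>\<bar> \<partial>M n) \<le> W n"
        using bound f(2) by auto
    qed
  qed
  with W show ?thesis
    unfolding L1_vanishing_def by blast
qed

lemma L1_vanishing_norm_mult:
  assumes d: "L2_vanishing d" and b: "L2_bounded b"
  shows "L1_vanishing (\<lambda>n i \<omega>. norm (d n i \<omega>) * norm (b n i \<omega>))"
proof -
  obtain V where V: "V \<longlonglongrightarrow> 0" and dom_d: "L2_dominated d V"
    using d unfolding L2_vanishing_def by blast
  obtain K where dom_b: "L2_dominated b (\<lambda>_. K)"
    using b unfolding L2_bounded_def by blast
  \<comment> \<open>Young's inequality with a weight \<open>e n > 0\<close> such that \<open>V n \<le> e n\<^sup>2\<close> and \<open>e n \<longlonglongrightarrow> 0\<close>\<close>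
  define e where "e n = sqrt (\<bar>V n\<bar> + inverse (real (Suc n)))" for n
  have e_pos: "0 < e n" for n
    unfolding e_def by (intro real_sqrt_gt_zero add_nonneg_pos) auto
  have V_le: "V n \<le> (e n)\<^sup>2" for n
    unfolding e_def by (simp add: add_increasing2)
  have "(\<lambda>n. \<bar>V n\<bar> + inverse (real (Suc n))) \<longlonglongrightarrow> 0"
    using tendsto_add_zero[OF tendsto_rabs_zero[OF V] LIMSEQ_inverse_real_of_nat] .
  then have e: "e \<longlonglongrightarrow> 0"
    unfolding e_def using tendsto_real_sqrt by fastforce
  have "L1_dominated (\<lambda>n i \<omega>. norm (d n i \<omega>) * norm (b n i \<omega>)) (\<lambda>n. e n * (1 + \<bar>K\<bar>) / 2)"
    using dom_d dom_b unfolding L1_dominated_def L2_dominated_def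
  proof eventually_elim
    case (elim n)
    show ?case
    proof
      fix i assume "i \<in> {1..n}"
      with elim have d: "d n i \<in> borel_measurable (M n)" "integrable (M n) (\<lambda>\<omega>. (norm (d n i \<omega>))\<^sup>2)"
          "(\<integral>\<omega>. (norm (d n i \<omega>))\<^sup>2 \<partial>M n) \<le> V n"
        and b: "b n i \<in> borel_measurable (M n)" "integrable (M n) (\<lambda>\<omega>. (norm (b n i \<omega>))\<^sup>2)"
          "(\<integral>\<omega>. (norm (b n i \<omega>))\<^sup>2 \<partial>M n) \<le> K"
        by auto
      have dom: "integrable (M n) (\<lambda>\<omega>. ((norm (d n i \<omega>))\<^sup>2 / e n + e n * (norm (b n i \<omega>))\<^sup>2) / 2)"
        using d b by simp
      have meas: "(\<lambda>\<omega>. norm (d n i \<omega>) * norm (b n i \<omega>)) \<in> borel_measurable (M n)"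
        using d b by measurable
      have le: "\<bar>norm (d n i \<omega>) * norm (b n i \<omega>)\<bar>
          \<le> ((norm (d n i \<omega>))\<^sup>2 / e n + e n * (norm (b n i \<omega>))\<^sup>2) / 2" for \<omega>
        using mult_le_weighted_squares[OF e_pos] by simp
      note bound = integrable_abs_integral_le[OF dom meas le]
      have "(\<integral>\<omega>. \<bar>norm (d n i \<omega>) * norm (b n i \<omega>)\<bar> \<partial>M n)
          \<le> ((\<integral>\<omega>. (norm (d n i \<omega>))\<^sup>2 \<partial>M n) / e n + e n * (\<integral>\<omega>. (norm (b n i \<omega>))\<^sup>2 \<partial>M n)) / 2"
        using bound(2) d b by simp
      also have "\<dots> \<le> ((e n)\<^sup>2 / e n + e n * \<bar>K\<bar>) / 2"
        using d(3) b(3) V_le[of n] e_pos[of n]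
        by (intro divide_right_mono add_mono mult_left_mono) (auto simp: less_imp_le)
      also have "\<dots> = e n * (1 + \<bar>K\<bar>) / 2"
        by (simp add: power2_eq_square algebra_simps)
      finally show "integrable (M n) (\<lambda>\<omega>. norm (d n i \<omega>) * norm (b n i \<omega>))
          \<and> (\<integral>\<omega>. \<bar>norm (d n i \<omega>) * norm (b n i \<omega>)\<bar> \<partial>M n) \<le> e n * (1 + \<bar>K\<bar>) / 2"
        using bound(1) by simp
    qed
  qed
  moreover have "(\<lambda>n. e n * (1 + \<bar>K\<bar>) / 2) \<longlonglongrightarrow> 0"
    using tendsto_mult_left_zero[OF e, of "(1 + \<bar>K\<bar>) / 2"] by simp
  ultimately show ?thesis
    unfolding L1_vanishing_def by blast
qed

lemma L2_bounded_measurable: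
  "L2_bounded F \<Longrightarrow> \<forall>\<^sub>F n in sequentially. \<forall>i\<in>{1..n}. F n i \<in> borel_measurable (M n)"
  unfolding L2_bounded_def L2_dominated_def by (auto elim: eventually_mono)

lemma L1_vanishing_bilinear:
  fixes a b :: "nat \<Rightarrow> nat \<Rightarrow> 'w \<Rightarrow> real^'m" and a' b' :: "nat \<Rightarrow> nat \<Rightarrow> 'w \<Rightarrow> real^'n"
    and Q :: "real^'n^'m"
  assumes "L2_bounded a" "L2_bounded a'" "L2_bounded b" "L2_bounded b'"
    and "L2_vanishing (\<lambda>n i \<omega>. a n i \<omega> - b n i \<omega>)" "L2_vanishing (\<lambda>n i \<omega>. a' n i \<omega> - b' n i \<omega>)"
  shows "L1_vanishing (\<lambda>n i \<omega>. a n i \<omega> \<bullet> (Q *v a' n i \<omega>) - b n i \<omega> \<bullet> (Q *v b' n i \<omega>))"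
proof (rule L1_vanishing_abs_le)
  show "L1_vanishing (\<lambda>n i \<omega>. norm Q * (norm (a n i \<omega> - b n i \<omega>) * norm (a' n i \<omega>)
                                    + norm (a' n i \<omega> - b' n i \<omega>) * norm (b n i \<omega>)))"
    using assms by (intro L1_vanishing_cmult L1_vanishing_add L1_vanishing_norm_mult)
  show "\<forall>\<^sub>F n in sequentially. \<forall>i\<in>{1..n}.
      (\<lambda>\<omega>. a n i \<omega> \<bullet> (Q *v a' n i \<omega>) - b n i \<omega> \<bullet> (Q *v b' n i \<omega>)) \<in> borel_measurable (M n) \<and>
      (\<forall>\<omega>. \<bar>a n i \<omega> \<bullet> (Q *v a' n i \<omega>) - b n i \<omega> \<bullet> (Q *v b' n i \<omega>)\<bar>
         \<le> \<bar>norm Q * (norm (a n i \<omega> - b n i \<omega>) * norm (a' n i \<omega>)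
                     + norm (a' n i \<omega> - b' n i \<omega>) * norm (b n i \<omega>))\<bar>)"
    using assms(1-4)[THEN L2_bounded_measurable]
  proof eventually_elim
    case (elim n)
    have "(\<lambda>\<omega>. Q *v x \<omega>) \<in> borel_measurable (M n)" if "x \<in> borel_measurable (M n)" for x
      using that
      by (intro borel_measurable_continuous_on[OF matrix_vector_mult_linear_continuous_on])
    moreover have "\<bar>x \<bullet> (Q *v y) - x' \<bullet> (Q *v y')\<bar>
        \<le> \<bar>norm Q * (norm (x - x') * norm y + norm (y - y') * norm x')\<bar>" for x x' y y'
      by (rule order_trans[OF abs_inner_matrix_vector_mult_diff_le abs_ge_self])
    ultimately show ?case
      using elim by (auto intro!: borel_measurable_diff borel_measurable_inner)
  qed
qed

lemma Max_abs_integral_diff_tendsto_zero: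
  assumes diff: "L1_vanishing (\<lambda>n i \<omega>. f n i \<omega> - g n i \<omega>)"
    and g: "\<forall>\<^sub>F n in sequentially. \<forall>i\<in>{1..n}. integrable (M n) (g n i)"
  shows "(\<lambda>n. Max ((\<lambda>i. \<bar>(\<integral>\<omega>. f n i \<omega> \<partial>M n) - (\<integral>\<omega>. g n i \<omega> \<partial>M n)\<bar>) ` {1..n})) \<longlonglongrightarrow> 0"
proof -
  obtain W where W: "W \<longlonglongrightarrow> 0" and dom: "L1_dominated (\<lambda>n i \<omega>. f n i \<omega> - g n i \<omega>) W"
    using diff unfolding L1_vanishing_def by blast
  have "\<forall>\<^sub>F n in sequentially.
      norm (Max ((\<lambda>i. \<bar>(\<integral>\<omega>. f n i \<omega> \<partial>M n) - (\<integral>\<omega>. g n i \<omega> \<partial>M n)\<bar>) ` {1..n})) \<le> W n"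
    using dom g eventually_ge_at_top[of 1] unfolding L1_dominated_def
  proof eventually_elim
    case (elim n)
    have each: "\<bar>(\<integral>\<omega>. f n i \<omega> \<partial>M n) - (\<integral>\<omega>. g n i \<omega> \<partial>M n)\<bar> \<le> W n" if i: "i \<in> {1..n}" for i
    proof -
      have fg: "integrable (M n) (\<lambda>\<omega>. f n i \<omega> - g n i \<omega>)" and gi: "integrable (M n) (g n i)"
        and fg_le: "(\<integral>\<omega>. \<bar>f n i \<omega> - g n i \<omega>\<bar> \<partial>M n) \<le> W n"
        using elim i by auto
      have "integrable (M n) (\<lambda>\<omega>. (f n i \<omega> - g n i \<omega>) + g n i \<omega>)"
        using fg gi by (rule Bochner_Integration.integrable_add)
      then have "(\<integral>\<omega>. f n i \<omega> \<partial>M n) - (\<integral>\<omega>. g n i \<omega> \<partial>M n) = (\<integral>\<omega>. f n i \<omega> - g n i \<omega> \<partial>M n)"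
        using gi by simp
      also have "\<bar>\<dots>\<bar> \<le> (\<integral>\<omega>. \<bar>f n i \<omega> - g n i \<omega>\<bar> \<partial>M n)"
        by (rule integral_abs_bound)
      finally show ?thesis
        using fg_le by linarith
    qed
    have "0 \<le> Max ((\<lambda>i. \<bar>(\<integral>\<omega>. f n i \<omega> \<partial>M n) - (\<integral>\<omega>. g n i \<omega> \<partial>M n)\<bar>) ` {1..n})"
      using elim by (intro order_trans[OF abs_ge_zero Max_ge]) auto
    moreover have "{1..n} \<noteq> {}"
      using elim by simp
    ultimately show ?case
      using each by (simp add: Max_le_iff)
  qed
  then show ?thesis
    by (rule Lim_null_comparison[OF _ W])
qed

lemma L2_vanishing_weighted_sum:
  fixes Z :: "nat \<Rightarrow> nat \<Rightarrow> 'w \<Rightarrow> 'a::euclidean_space"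
  assumes weights: "\<forall>\<^sub>F n in sequentially. \<forall>j\<in>{1..n}. \<bar>a n j\<bar> \<le> \<gamma> / real n"
    and moments: "\<forall>\<^sub>F n in sequentially. \<forall>j\<in>{1..n}.
        integrable (M n) (Z n j) \<and> (\<integral>\<omega>. Z n j \<omega> \<partial>M n) = 0
      \<and> integrable (M n) (\<lambda>\<omega>. (norm (Z n j \<omega>))\<^sup>2) \<and> (\<integral>\<omega>. (norm (Z n j \<omega>))\<^sup>2 \<partial>M n) \<le> C"
    and indep: "\<forall>\<^sub>F n in sequentially. \<forall>j\<in>{1..n}. \<forall>k\<in>{1..n}.
        j \<noteq> k \<longrightarrow> prob_space.indep_var (M n) borel (Z n j) borel (Z n k)"
  shows "L2_vanishing (\<lambda>n i \<omega>. \<Sum>j\<in>{1..n}. a n j *\<^sub>R Z n j \<omega>)"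
  unfolding L2_vanishing_def
proof (intro exI conjI)
  show "(\<lambda>n. \<gamma>\<^sup>2 * \<bar>C\<bar> / real n) \<longlonglongrightarrow> 0"
    by (rule lim_const_over_n)
  show "L2_dominated (\<lambda>n i \<omega>. \<Sum>j\<in>{1..n}. a n j *\<^sub>R Z n j \<omega>) (\<lambda>n. \<gamma>\<^sup>2 * \<bar>C\<bar> / real n)"
    using eventually_prob_space eventually_ge_at_top[of 1] weights moments indep
    unfolding L2_dominated_def
  proof eventually_elim
    case (elim n)
    interpret prob_space "M n"
      using elim by simp
    note second_moment = integral_norm_sum_pairwise_indep[of "{1..n}" "Z n" "a n"]
    have "(\<Sum>j\<in>{1..n}. (a n j)\<^sup>2 * (\<integral>\<omega>. (norm (Z n j \<omega>))\<^sup>2 \<partial>M n))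
        \<le> (\<Sum>j\<in>{1..n}. (\<gamma> / real n)\<^sup>2 * \<bar>C\<bar>)"
    proof (intro sum_mono mult_mono)
      fix j assume "j \<in> {1..n}"
      with elim show "(a n j)\<^sup>2 \<le> (\<gamma> / real n)\<^sup>2"
        by (metis abs_ge_zero power2_abs power_mono)
      from elim \<open>j \<in> {1..n}\<close> show "(\<integral>\<omega>. (norm (Z n j \<omega>))\<^sup>2 \<partial>M n) \<le> \<bar>C\<bar>"
        by fastforce
    qed auto
    also have "\<dots> = \<gamma>\<^sup>2 * \<bar>C\<bar> / real n"
      using elim by (simp add: power2_eq_square)
    finally show ?case
      using elim second_moment
      by (auto intro!: borel_measurable_sum borel_measurable_scaleR borel_measurable_integrable)
  qed
qed

end

section \<open>Trajectories of memoryless profiles\<close>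

definition memoryless :: "('x::finite, 'u::finite) strat \<Rightarrow> bool" where
  "memoryless g \<longleftrightarrow> (\<forall>j t H H'. H t = H' t \<longrightarrow> g j t H = g j t H')"

primrec traj ::
  "('x::finite, 'u::finite) lqm \<Rightarrow> nat \<Rightarrow> (nat \<Rightarrow> real) \<Rightarrow> ('x, 'u) strat \<Rightarrow> (nat \<Rightarrow> real^'x)
   \<Rightarrow> (nat \<Rightarrow> nat \<Rightarrow> real^'x) \<Rightarrow> nat \<Rightarrow> nat \<Rightarrow> real^'x" where
  "traj m n a g x1 w 0 = (\<lambda>j. 0)"
| "traj m n a g x1 w (Suc t) = (\<lambda>j. if j \<in> {1..n} then
      (if t = 0 then x1 j else next_state m n a g w t (\<lambda>s. traj m n a g x1 w t) j) else 0)"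

lemma memoryless_lin_profile: "memoryless (lin_profile n a \<theta> \<theta>b)"
  unfolding memoryless_def lin_profile_def by simp

lemma memoryless_noshare_profile: "memoryless (noshare_profile \<theta> \<theta>b z)"
  unfolding memoryless_def noshare_profile_def by simp

lemma memoryless_apply_cong: "memoryless g \<Longrightarrow> H t = H' t \<Longrightarrow> g j t H = g j t H'"
  unfolding memoryless_def by blast

lemma hist_diagonal_eq_traj:
  assumes "memoryless g"
  shows "hist m n a g x1 w t t = traj m n a g x1 w t"
proof (induction t)
  case (Suc t)
  have "g k t (hist m n a g x1 w t) = g k t (\<lambda>s. traj m n a g x1 w t)" for k
    by (rule memoryless_apply_cong[OF assms]) (simp add: Suc.IH)
  then have "next_state m n a g w t (hist m n a g x1 w t) j
      = next_state m n a g w t (\<lambda>s. traj m n a g x1 w t) j" for j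
    unfolding next_state_def using Suc.IH by simp
  then show ?case
    by (intro ext) simp
qed simp

lemma rcost_memoryless:
  assumes "memoryless g"
  shows "rcost m T n a x1 w g t0 i \<omega> =
    (\<Sum>t\<in>{t0..T}. stage_cost m n a t i (traj m n a g (\<lambda>j. x1 j \<omega>) (\<lambda>t j. w t j \<omega>) t)
        (\<lambda>j. g j t (\<lambda>s. traj m n a g (\<lambda>j. x1 j \<omega>) (\<lambda>t j. w t j \<omega>) t)))"
proof -
  let ?X = "traj m n a g (\<lambda>j. x1 j \<omega>) (\<lambda>t j. w t j \<omega>)"
  have "g j t (hist m n a g (\<lambda>j. x1 j \<omega>) (\<lambda>t j. w t j \<omega>) t) = g j t (\<lambda>s. ?X t)" for j t
    by (rule memoryless_apply_cong[OF assms]) (simp add: hist_diagonal_eq_traj[OF assms])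
  then show ?thesis
    unfolding rcost_def cost_from_def by (simp only: hist_diagonal_eq_traj[OF assms])
qed

lemma wavg_add: "wavg n a (\<lambda>k. f k + g k) = wavg n a f + wavg n a g"
  unfolding wavg_def by (simp add: scaleR_add_right sum.distrib)

lemma wavg_matrix_vector_mult:
  fixes C :: "real^'n^'m"
  shows "wavg n a (\<lambda>k. C *v f k) = C *v wavg n a f"
proof -
  have "C *v (\<Sum>k\<in>{1..n}. a k *\<^sub>R f k) = (\<Sum>k\<in>{1..n}. C *v (a k *\<^sub>R f k))"
    using linear_sum[OF matrix_vector_mul_linear, of C "\<lambda>k. a k *\<^sub>R f k" "{1..n}"]
    by (simp add: comp_def)
  then show ?thesis
    unfolding wavg_def by (simp add: matrix_vector_mult_scaleR)
qed

lemma wavg_const: "(\<Sum>i\<in>{1..n}. a i) = 1 \<Longrightarrow> wavg n a (\<lambda>k. c) = c"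
  unfolding wavg_def by (simp flip: scaleR_sum_left)

lemma wavg_cong: "(\<And>k. k \<in> {1..n} \<Longrightarrow> f k = g k) \<Longrightarrow> wavg n a f = wavg n a g"
  unfolding wavg_def by simp

lemma stage_cost_diff:
  "stage_cost m n a t i X U - stage_cost m n a t i X' U' =
    (X i \<bullet> (mQ m t *v X i) - X' i \<bullet> (mQ m t *v X' i))
  + 2 * (X i \<bullet> (mSx m t *v wavg n a X) - X' i \<bullet> (mSx m t *v wavg n a X'))
  + (wavg n a X \<bullet> (mQb m t *v wavg n a X) - wavg n a X' \<bullet> (mQb m t *v wavg n a X'))
  + (U i \<bullet> (mR m t *v U i) - U' i \<bullet> (mR m t *v U' i))
  + 2 * (U i \<bullet> (mSu m t *v wavg n a U) - U' i \<bullet> (mSu m t *v wavg n a U'))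
  + (wavg n a U \<bullet> (mRb m t *v wavg n a U) - wavg n a U' \<bullet> (mRb m t *v wavg n a U'))
  + (\<Sum>j\<in>{1..n}. a j * ((X j \<bullet> (mGx m t *v X j) - X' j \<bullet> (mGx m t *v X' j))
        + (U j \<bullet> (mGu m t *v U j) - U' j \<bullet> (mGu m t *v U' j))))"
proof -
  have "(\<Sum>j\<in>{1..n}. a j * ((X j \<bullet> (mGx m t *v X j) - X' j \<bullet> (mGx m t *v X' j))
        + (U j \<bullet> (mGu m t *v U j) - U' j \<bullet> (mGu m t *v U' j)))) =
    (\<Sum>j\<in>{1..n}. a j * (X j \<bullet> (mGx m t *v X j) + U j \<bullet> (mGu m t *v U j))) -
    (\<Sum>j\<in>{1..n}. a j * (X' j \<bullet> (mGx m t *v X' j) + U' j \<bullet> (mGu m t *v U' j)))"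
    by (simp add: sum_subtractf[symmetric] algebra_simps)
  then show ?thesis
    unfolding stage_cost_def Let_def by simp
qed

section \<open>Mean-field approximation of the linear equilibrium\<close>

locale lq_population = prob_space_sequence M for M :: "nat \<Rightarrow> 'w measure" +
  fixes T :: nat and \<alpha> :: "nat \<Rightarrow> nat \<Rightarrow> real"
    and x1 :: "nat \<Rightarrow> nat \<Rightarrow> 'w \<Rightarrow> real^'x::finite" and w :: "nat \<Rightarrow> nat \<Rightarrow> nat \<Rightarrow> 'w \<Rightarrow> real^'x"
    and \<mu>x :: "real^'x" and \<gamma> C :: real
  assumes weights_sum: "\<forall>\<^sub>F n in sequentially. (\<Sum>i\<in>{1..n}. \<alpha> n i) = 1"
    and weights_vanish: "\<forall>\<^sub>F n in sequentially. \<forall>i\<in>{1..n}. \<bar>\<alpha> n i\<bar> \<le> \<gamma> / real n"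
    and indep: "\<forall>\<^sub>F n in sequentially.
      prob_space.indep_vars (M n) (\<lambda>_. borel) (prim_rv (x1 n) (w n)) ({0..T} \<times> {1..n})"
    and init_moments: "\<forall>\<^sub>F n in sequentially. \<forall>i\<in>{1..n}.
        integrable (M n) (x1 n i) \<and> (\<integral>\<omega>. x1 n i \<omega> \<partial>M n) = \<mu>x
      \<and> integrable (M n) (\<lambda>\<omega>. (norm (x1 n i \<omega> - \<mu>x))\<^sup>2) \<and> (\<integral>\<omega>. (norm (x1 n i \<omega> - \<mu>x))\<^sup>2 \<partial>M n) \<le> C"
    and noise_moments: "\<forall>\<^sub>F n in sequentially. \<forall>t\<in>{1..T}. \<forall>i\<in>{1..n}.
        integrable (M n) (w n t i) \<and> (\<integral>\<omega>. w n t i \<omega> \<partial>M n) = 0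
      \<and> integrable (M n) (\<lambda>\<omega>. (norm (w n t i \<omega>))\<^sup>2) \<and> (\<integral>\<omega>. (norm (w n t i \<omega>))\<^sup>2 \<partial>M n) \<le> C"
begin

lemma weights_abs_sum_le: "\<forall>\<^sub>F n in sequentially. (\<Sum>j\<in>{1..n}. \<bar>\<alpha> n j\<bar>) \<le> \<gamma>"
  using weights_vanish eventually_ge_at_top[of 1]
proof eventually_elim
  case (elim n)
  then have "(\<Sum>j\<in>{1..n}. \<bar>\<alpha> n j\<bar>) \<le> (\<Sum>j\<in>{1..n}. \<gamma> / real n)"
    by (intro sum_mono) auto
  also have "\<dots> = \<gamma>"
    using elim by simp
  finally show ?case .
qed

lemma init_mean_eq: "\<forall>\<^sub>F n in sequentially. init_mean n (\<alpha> n) (M n) (x1 n) = \<mu>x"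
  using weights_sum init_moments
proof eventually_elim
  case (elim n)
  then have "init_mean n (\<alpha> n) (M n) (x1 n) = wavg n (\<alpha> n) (\<lambda>_. \<mu>x)"
    unfolding init_mean_def by (intro wavg_cong) auto
  with elim show ?case
    by (simp add: wavg_const)
qed

lemma init_bounded: "L2_bounded (\<lambda>n i \<omega>. x1 n i \<omega>)"
proof -
  have "L2_dominated (\<lambda>n i \<omega>. x1 n i \<omega> - \<mu>x) (\<lambda>_. C)"
    using init_moments unfolding L2_dominated_def
    by eventually_elim (auto intro: borel_measurable_integrable)
  then have "L2_bounded (\<lambda>n i \<omega>. x1 n i \<omega> - \<mu>x)"
    unfolding L2_bounded_def by blast
  from L2_bounded_add[OF this L2_bounded_const[of "\<lambda>_. \<mu>x"]] show ?thesis
    by simp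
qed

lemma noise_bounded:
  assumes "t \<in> {1..T}"
  shows "L2_bounded (\<lambda>n i \<omega>. w n t i \<omega>)"
proof -
  have "L2_dominated (\<lambda>n i \<omega>. w n t i \<omega>) (\<lambda>_. C)"
    using noise_moments unfolding L2_dominated_def
    by eventually_elim (use assms in \<open>auto intro: borel_measurable_integrable\<close>)
  then show ?thesis
    unfolding L2_bounded_def by blast
qed

lemma indep_var_primitive:
  assumes s: "s \<le> T" and f: "f \<in> borel_measurable borel"
  shows "\<forall>\<^sub>F n in sequentially. \<forall>j\<in>{1..n}. \<forall>k\<in>{1..n}. j \<noteq> k \<longrightarrow>
    prob_space.indep_var (M n) borel (\<lambda>\<omega>. f (prim_rv (x1 n) (w n) (s, j) \<omega>))
                              borel (\<lambda>\<omega>. f (prim_rv (x1 n) (w n) (s, k) \<omega>))"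
  using eventually_prob_space indep
proof eventually_elim
  case (elim n)
  from prob_space.indep_var_of_indep_vars[OF elim _ _ _ f f] show ?case
    using s by auto
qed

lemma init_average_vanishing: "L2_vanishing (\<lambda>n i \<omega>. wavg n (\<alpha> n) (\<lambda>j. x1 n j \<omega>) - \<mu>x)"
proof (rule L2_vanishing_cong)
  have "(\<lambda>v. v - \<mu>x) \<in> borel_measurable borel"
    by measurable
  from indep_var_primitive[OF le0 this]
  have "\<forall>\<^sub>F n in sequentially. \<forall>j\<in>{1..n}. \<forall>k\<in>{1..n}. j \<noteq> k \<longrightarrow>
    prob_space.indep_var (M n) borel (\<lambda>\<omega>. x1 n j \<omega> - \<mu>x) borel (\<lambda>\<omega>. x1 n k \<omega> - \<mu>x)"
    by eventually_elim (simp add: prim_rv_def)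
  moreover have "\<forall>\<^sub>F n in sequentially. \<forall>j\<in>{1..n}.
      integrable (M n) (\<lambda>\<omega>. x1 n j \<omega> - \<mu>x) \<and> (\<integral>\<omega>. x1 n j \<omega> - \<mu>x \<partial>M n) = 0
    \<and> integrable (M n) (\<lambda>\<omega>. (norm (x1 n j \<omega> - \<mu>x))\<^sup>2) \<and> (\<integral>\<omega>. (norm (x1 n j \<omega> - \<mu>x))\<^sup>2 \<partial>M n) \<le> C"
    using eventually_prob_space init_moments
  proof eventually_elim
    case (elim n)
    then interpret prob_space "M n"
      by simp
    show ?case
      using elim(2) by (simp add: prob_space)
  qed
  ultimately show "L2_vanishing (\<lambda>n i \<omega>. \<Sum>j\<in>{1..n}. \<alpha> n j *\<^sub>R (x1 n j \<omega> - \<mu>x))"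
    by (intro L2_vanishing_weighted_sum[OF weights_vanish])
  show "\<forall>\<^sub>F n in sequentially. \<forall>i\<in>{1..n}. \<forall>\<omega>.
      wavg n (\<alpha> n) (\<lambda>j. x1 n j \<omega>) - \<mu>x = (\<Sum>j\<in>{1..n}. \<alpha> n j *\<^sub>R (x1 n j \<omega> - \<mu>x))"
    using weights_sum
    by eventually_elim (simp add: wavg_def scaleR_diff_right sum_subtractf flip: scaleR_sum_left)
qed

lemma noise_average_vanishing:
  assumes t: "t \<in> {1..T}"
  shows "L2_vanishing (\<lambda>n i \<omega>. wavg n (\<alpha> n) (\<lambda>j. w n t j \<omega>))"
  unfolding wavg_def
proof (rule L2_vanishing_weighted_sum[OF weights_vanish])
  have "t \<le> T" "(\<lambda>v. v) \<in> borel_measurable borel"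
    using t by simp_all
  from indep_var_primitive[OF this]
  show "\<forall>\<^sub>F n in sequentially. \<forall>j\<in>{1..n}. \<forall>k\<in>{1..n}. j \<noteq> k \<longrightarrow>
    prob_space.indep_var (M n) borel (w n t j) borel (w n t k)"
    by eventually_elim (use t in \<open>simp add: prim_rv_def\<close>)
  show "\<forall>\<^sub>F n in sequentially. \<forall>j\<in>{1..n}.
      integrable (M n) (w n t j) \<and> (\<integral>\<omega>. w n t j \<omega> \<partial>M n) = 0
    \<and> integrable (M n) (\<lambda>\<omega>. (norm (w n t j \<omega>))\<^sup>2) \<and> (\<integral>\<omega>. (norm (w n t j \<omega>))\<^sup>2 \<partial>M n) \<le> C"
    using noise_moments by eventually_elim (use t in simp)
qed

lemma L2_bounded_cong_normalized:
  assumes "L2_bounded F"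
    and "\<And>n i \<omega>. (\<Sum>k\<in>{1..n}. \<alpha> n k) = 1 \<Longrightarrow> i \<in> {1..n} \<Longrightarrow> G n i \<omega> = F n i \<omega>"
  shows "L2_bounded G"
  using assms(1) by (rule L2_bounded_cong)
    (use weights_sum in \<open>eventually_elim, simp add: assms(2)\<close>)

lemma L2_vanishing_cong_normalized:
  assumes "L2_vanishing F"
    and "\<And>n i \<omega>. (\<Sum>k\<in>{1..n}. \<alpha> n k) = 1 \<Longrightarrow> i \<in> {1..n} \<Longrightarrow> G n i \<omega> = F n i \<omega>"
  shows "L2_vanishing G"
  using assms(1) by (rule L2_vanishing_cong)
    (use weights_sum in \<open>eventually_elim, simp add: assms(2)\<close>)

end

(* The no-sharing profile uses the gains \<eta>, \<eta>b: the equilibrium gains themselves for the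
   first claim of the theorem and their limits for the second; all that matters is that
   they have the same limits as \<theta>, \<theta>b. *)
locale lq_comparison = lq_population M T \<alpha> x1 w \<mu>x \<gamma> C
  for M :: "nat \<Rightarrow> 'w measure" and T \<alpha> and x1 :: "nat \<Rightarrow> nat \<Rightarrow> 'w \<Rightarrow> real^'x::finite"
    and w \<mu>x \<gamma> C +
  fixes m :: "('x, 'u::finite) lqm"
    and \<theta> \<theta>b \<eta> \<eta>b :: "nat \<Rightarrow> nat \<Rightarrow> real^'x^'u" and \<theta>inf \<theta>binf :: "nat \<Rightarrow> real^'x^'u"
  assumes gains_tendsto: "\<And>t. t \<in> {1..T} \<Longrightarrow>
      (\<lambda>n. \<theta> n t) \<longlonglongrightarrow> \<theta>inf t \<and> (\<lambda>n. \<theta>b n t) \<longlonglongrightarrow> \<theta>binf t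
    \<and> (\<lambda>n. \<eta> n t) \<longlonglongrightarrow> \<theta>inf t \<and> (\<lambda>n. \<eta>b n t) \<longlonglongrightarrow> \<theta>binf t"
    and eq_cost_integrable: "\<forall>\<^sub>F n in sequentially. \<forall>t0\<in>{1..T}. \<forall>i\<in>{1..n}.
      integrable (M n) (rcost m T n (\<alpha> n) (x1 n) (w n) (lin_profile n (\<alpha> n) (\<theta> n) (\<theta>b n)) t0 i)"
begin

definition z :: "nat \<Rightarrow> nat \<Rightarrow> real^'x" where
  "z n = zpred m (\<eta>b n) (init_mean n (\<alpha> n) (M n) (x1 n))"
definition g_eq :: "nat \<Rightarrow> ('x, 'u) strat" where
  "g_eq n = lin_profile n (\<alpha> n) (\<theta> n) (\<theta>b n)"
definition g_ns :: "nat \<Rightarrow> ('x, 'u) strat" where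
  "g_ns n = noshare_profile (\<eta> n) (\<eta>b n) (z n)"
definition x_eq :: "nat \<Rightarrow> nat \<Rightarrow> nat \<Rightarrow> 'w \<Rightarrow> real^'x" where
  "x_eq n t j \<omega> = traj m n (\<alpha> n) (g_eq n) (\<lambda>j. x1 n j \<omega>) (\<lambda>t j. w n t j \<omega>) t j"
definition x_ns :: "nat \<Rightarrow> nat \<Rightarrow> nat \<Rightarrow> 'w \<Rightarrow> real^'x" where
  "x_ns n t j \<omega> = traj m n (\<alpha> n) (g_ns n) (\<lambda>j. x1 n j \<omega>) (\<lambda>t j. w n t j \<omega>) t j"
definition xbar_eq :: "nat \<Rightarrow> nat \<Rightarrow> 'w \<Rightarrow> real^'x" where
  "xbar_eq n t \<omega> = wavg n (\<alpha> n) (\<lambda>j. x_eq n t j \<omega>)"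
definition xbar_ns :: "nat \<Rightarrow> nat \<Rightarrow> 'w \<Rightarrow> real^'x" where
  "xbar_ns n t \<omega> = wavg n (\<alpha> n) (\<lambda>j. x_ns n t j \<omega>)"
definition u_eq :: "nat \<Rightarrow> nat \<Rightarrow> nat \<Rightarrow> 'w \<Rightarrow> real^'u" where
  "u_eq n t j \<omega> = \<theta> n t *v x_eq n t j \<omega> + (\<theta>b n t - \<theta> n t) *v xbar_eq n t \<omega>"
definition u_ns :: "nat \<Rightarrow> nat \<Rightarrow> nat \<Rightarrow> 'w \<Rightarrow> real^'u" where
  "u_ns n t j \<omega> = \<eta> n t *v x_ns n t j \<omega> + (\<eta>b n t - \<eta> n t) *v z n t"
definition ubar_eq :: "nat \<Rightarrow> nat \<Rightarrow> 'w \<Rightarrow> real^'u" where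
  "ubar_eq n t \<omega> = wavg n (\<alpha> n) (\<lambda>j. u_eq n t j \<omega>)"
definition ubar_ns :: "nat \<Rightarrow> nat \<Rightarrow> 'w \<Rightarrow> real^'u" where
  "ubar_ns n t \<omega> = wavg n (\<alpha> n) (\<lambda>j. u_ns n t j \<omega>)"
definition wbar :: "nat \<Rightarrow> nat \<Rightarrow> 'w \<Rightarrow> real^'x" where
  "wbar n t \<omega> = wavg n (\<alpha> n) (\<lambda>j. w n t j \<omega>)"

lemma x_eq_1: "j \<in> {1..n} \<Longrightarrow> x_eq n (Suc 0) j \<omega> = x1 n j \<omega>"
  and x_ns_1: "j \<in> {1..n} \<Longrightarrow> x_ns n (Suc 0) j \<omega> = x1 n j \<omega>"
  unfolding x_eq_def x_ns_def by simp_all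

lemma x_eq_Suc:
  "j \<in> {1..n} \<Longrightarrow> 1 \<le> t \<Longrightarrow> x_eq n (Suc t) j \<omega> = mA m t *v x_eq n t j \<omega> + mB m t *v u_eq n t j \<omega>
     + mAb m t *v xbar_eq n t \<omega> + mBb m t *v ubar_eq n t \<omega> + w n t j \<omega>"
  unfolding x_eq_def u_eq_def xbar_eq_def ubar_eq_def g_eq_def
  by (simp add: next_state_def lin_profile_def x_eq_def)

lemma x_ns_Suc:
  "j \<in> {1..n} \<Longrightarrow> 1 \<le> t \<Longrightarrow> x_ns n (Suc t) j \<omega> = mA m t *v x_ns n t j \<omega> + mB m t *v u_ns n t j \<omega>
     + mAb m t *v xbar_ns n t \<omega> + mBb m t *v ubar_ns n t \<omega> + w n t j \<omega>"
  unfolding x_ns_def u_ns_def xbar_ns_def ubar_ns_def g_ns_def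
  by (simp add: next_state_def noshare_profile_def x_ns_def)

context
  fixes n assumes normalized: "(\<Sum>i\<in>{1..n}. \<alpha> n i) = 1"
begin

lemma ubar_eq_formula: "ubar_eq n t \<omega> = \<theta>b n t *v xbar_eq n t \<omega>"
proof -
  have "ubar_eq n t \<omega> = \<theta> n t *v xbar_eq n t \<omega> + (\<theta>b n t - \<theta> n t) *v xbar_eq n t \<omega>"
    unfolding ubar_eq_def u_eq_def
    by (simp only: wavg_add wavg_matrix_vector_mult wavg_const[OF normalized] flip: xbar_eq_def)
  then show ?thesis
    by (simp add: algebra_simps)
qed

lemma ubar_ns_formula: "ubar_ns n t \<omega> = \<eta> n t *v xbar_ns n t \<omega> + (\<eta>b n t - \<eta> n t) *v z n t"
  unfolding ubar_ns_def u_ns_def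
  by (simp only: wavg_add wavg_matrix_vector_mult wavg_const[OF normalized] flip: xbar_ns_def)

lemma xbar_eq_Suc:
  assumes "1 \<le> t"
  shows "xbar_eq n (Suc t) \<omega> = mA m t *v xbar_eq n t \<omega> + mB m t *v ubar_eq n t \<omega>
     + mAb m t *v xbar_eq n t \<omega> + mBb m t *v ubar_eq n t \<omega> + wbar n t \<omega>"
proof -
  have "xbar_eq n (Suc t) \<omega> = wavg n (\<alpha> n) (\<lambda>j. mA m t *v x_eq n t j \<omega> + mB m t *v u_eq n t j \<omega>
     + mAb m t *v xbar_eq n t \<omega> + mBb m t *v ubar_eq n t \<omega> + w n t j \<omega>)"
    using assms by (subst xbar_eq_def, intro wavg_cong) (simp add: x_eq_Suc)
  then show ?thesis
    by (simp only: wavg_add wavg_matrix_vector_mult wavg_const[OF normalized]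
        flip: xbar_eq_def ubar_eq_def wbar_def)
qed

lemma xbar_ns_Suc:
  assumes "1 \<le> t"
  shows "xbar_ns n (Suc t) \<omega> = mA m t *v xbar_ns n t \<omega> + mB m t *v ubar_ns n t \<omega>
     + mAb m t *v xbar_ns n t \<omega> + mBb m t *v ubar_ns n t \<omega> + wbar n t \<omega>"
proof -
  have "xbar_ns n (Suc t) \<omega> = wavg n (\<alpha> n) (\<lambda>j. mA m t *v x_ns n t j \<omega> + mB m t *v u_ns n t j \<omega>
     + mAb m t *v xbar_ns n t \<omega> + mBb m t *v ubar_ns n t \<omega> + w n t j \<omega>)"
    using assms by (subst xbar_ns_def, intro wavg_cong) (simp add: x_ns_Suc)
  then show ?thesis
    by (simp only: wavg_add wavg_matrix_vector_mult wavg_const[OF normalized]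
        flip: xbar_ns_def ubar_ns_def wbar_def)
qed

end

lemma z_Suc:
  "1 \<le> t \<Longrightarrow> z n (Suc t) = mA m t *v z n t + mAb m t *v z n t
     + mB m t *v (\<eta>b n t *v z n t) + mBb m t *v (\<eta>b n t *v z n t)"
  unfolding z_def by (simp add: matrix_vector_mult_add_rdistrib flip: matrix_vector_mul_assoc)

lemma z_1: "\<forall>\<^sub>F n in sequentially. z n (Suc 0) = \<mu>x"
  using init_mean_eq by eventually_elim (simp add: z_def)

lemma gains_Bseq:
  assumes "t \<in> {1..T}"
  shows "Bseq (\<lambda>n. \<theta> n t)" "Bseq (\<lambda>n. \<theta>b n t)" "Bseq (\<lambda>n. \<eta> n t)" "Bseq (\<lambda>n. \<eta>b n t)"
    "Bseq (\<lambda>n. \<theta>b n t - \<theta> n t)" "Bseq (\<lambda>n. \<eta>b n t - \<eta> n t)"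
  using gains_tendsto[OF assms] by (auto intro!: convergent_imp_Bseq convergentI tendsto_diff)

lemma gain_gaps_tendsto_zero:
  assumes "t \<in> {1..T}"
  shows "(\<lambda>n. \<eta> n t - \<theta> n t) \<longlonglongrightarrow> 0"
    and "(\<lambda>n. (\<eta>b n t - \<eta> n t) - (\<theta>b n t - \<theta> n t)) \<longlonglongrightarrow> 0"
    and "(\<lambda>n. \<eta>b n t - \<theta>b n t) \<longlonglongrightarrow> 0"
    and "(\<lambda>n. \<theta>b n t - \<eta>b n t) \<longlonglongrightarrow> 0"
proof -
  note lim = gains_tendsto[OF assms]
  show "(\<lambda>n. \<eta> n t - \<theta> n t) \<longlonglongrightarrow> 0"
    using tendsto_diff[of "\<lambda>n. \<eta> n t" _ _ "\<lambda>n. \<theta> n t"] lim by fastforce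
  show "(\<lambda>n. \<eta>b n t - \<theta>b n t) \<longlonglongrightarrow> 0"
    using tendsto_diff[of "\<lambda>n. \<eta>b n t" _ _ "\<lambda>n. \<theta>b n t"] lim by fastforce
  show "(\<lambda>n. \<theta>b n t - \<eta>b n t) \<longlonglongrightarrow> 0"
    using tendsto_diff[of "\<lambda>n. \<theta>b n t" _ _ "\<lambda>n. \<eta>b n t"] lim by fastforce
  have "(\<lambda>n. (\<eta>b n t - \<theta>b n t) - (\<eta> n t - \<theta> n t)) \<longlonglongrightarrow> 0 - 0"
    by (intro tendsto_diff) fact+
  then show "(\<lambda>n. (\<eta>b n t - \<eta> n t) - (\<theta>b n t - \<theta> n t)) \<longlonglongrightarrow> 0"
    by (simp add: algebra_simps)
qed

definition approx_at :: "nat \<Rightarrow> bool" where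
  "approx_at t \<longleftrightarrow> L2_bounded (\<lambda>n i \<omega>. x_ns n t i \<omega>)
     \<and> L2_vanishing (\<lambda>n i \<omega>. x_ns n t i \<omega> - x_eq n t i \<omega>)
     \<and> L2_vanishing (\<lambda>n i \<omega>. xbar_ns n t \<omega> - z n t)
     \<and> L2_vanishing (\<lambda>n i \<omega>. xbar_eq n t \<omega> - z n t)
     \<and> L2_bounded (\<lambda>n i \<omega>. z n t)"

lemma approx_at_1: "approx_at (Suc 0)"
proof -
  have "xbar_ns n (Suc 0) \<omega> = wavg n (\<alpha> n) (\<lambda>j. x1 n j \<omega>)"
    and "xbar_eq n (Suc 0) \<omega> = wavg n (\<alpha> n) (\<lambda>j. x1 n j \<omega>)" for n \<omega>
    unfolding xbar_ns_def xbar_eq_def by (intro wavg_cong; simp add: x_ns_1 x_eq_1)+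
  then have "L2_vanishing (\<lambda>n i \<omega>. xbar_ns n (Suc 0) \<omega> - z n (Suc 0))"
    and "L2_vanishing (\<lambda>n i \<omega>. xbar_eq n (Suc 0) \<omega> - z n (Suc 0))"
    using init_average_vanishing
    by (auto elim!: L2_vanishing_cong intro: eventually_mono[OF z_1])
  moreover have "L2_bounded (\<lambda>n i \<omega>. z n (Suc 0))"
    using L2_bounded_const[of "\<lambda>_. \<mu>x"]
    by (rule L2_bounded_cong) (auto intro: eventually_mono[OF z_1])
  moreover have "L2_bounded (\<lambda>n i \<omega>. x_ns n (Suc 0) i \<omega>)"
    using init_bounded by (rule L2_bounded_cong) (simp add: x_ns_1)
  moreover have "L2_vanishing (\<lambda>n i \<omega>. x_ns n (Suc 0) i \<omega> - x_eq n (Suc 0) i \<omega>)"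
    using L2_vanishing_const[of "\<lambda>_. 0"] by (rule L2_vanishing_cong) (auto simp: x_ns_1 x_eq_1)
  ultimately show ?thesis
    unfolding approx_at_def by blast
qed

context
  fixes t assumes approx: "approx_at t" and t: "t \<in> {1..T}"
begin

lemma x_ns_bounded: "L2_bounded (\<lambda>n i \<omega>. x_ns n t i \<omega>)"
  and x_diff_vanishing: "L2_vanishing (\<lambda>n i \<omega>. x_ns n t i \<omega> - x_eq n t i \<omega>)"
  and xbar_ns_dev_vanishing: "L2_vanishing (\<lambda>n i \<omega>. xbar_ns n t \<omega> - z n t)"
  and xbar_eq_dev_vanishing: "L2_vanishing (\<lambda>n i \<omega>. xbar_eq n t \<omega> - z n t)"
  and z_bounded: "L2_bounded (\<lambda>n i \<omega>. z n t)"
  using approx unfolding approx_at_def by auto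

lemma x_eq_bounded: "L2_bounded (\<lambda>n i \<omega>. x_eq n t i \<omega>)"
  using L2_bounded_diff[OF x_ns_bounded L2_vanishing_imp_bounded[OF x_diff_vanishing]]
  by (rule L2_bounded_cong) simp

lemma xbar_ns_bounded: "L2_bounded (\<lambda>n i \<omega>. xbar_ns n t \<omega>)"
  using L2_bounded_add[OF L2_vanishing_imp_bounded[OF xbar_ns_dev_vanishing] z_bounded]
  by (rule L2_bounded_cong) simp

lemma xbar_eq_bounded: "L2_bounded (\<lambda>n i \<omega>. xbar_eq n t \<omega>)"
  using L2_bounded_add[OF L2_vanishing_imp_bounded[OF xbar_eq_dev_vanishing] z_bounded]
  by (rule L2_bounded_cong) simp

lemma xbar_diff_vanishing: "L2_vanishing (\<lambda>n i \<omega>. xbar_ns n t \<omega> - xbar_eq n t \<omega>)"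
  using L2_vanishing_diff[OF xbar_ns_dev_vanishing xbar_eq_dev_vanishing]
  by (rule L2_vanishing_cong) simp

lemma u_ns_bounded: "L2_bounded (\<lambda>n i \<omega>. u_ns n t i \<omega>)"
  unfolding u_ns_def
  by (intro L2_bounded_add L2_bounded_matrix_mult gains_Bseq[OF t] x_ns_bounded z_bounded)

lemma u_eq_bounded: "L2_bounded (\<lambda>n i \<omega>. u_eq n t i \<omega>)"
  unfolding u_eq_def
  by (intro L2_bounded_add L2_bounded_matrix_mult gains_Bseq[OF t] x_eq_bounded xbar_eq_bounded)

lemma ubar_ns_bounded: "L2_bounded (\<lambda>n i \<omega>. ubar_ns n t \<omega>)"
proof (rule L2_bounded_cong_normalized)
  show "L2_bounded (\<lambda>n i \<omega>. \<eta> n t *v xbar_ns n t \<omega> + (\<eta>b n t - \<eta> n t) *v z n t)"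
    by (intro L2_bounded_add L2_bounded_matrix_mult gains_Bseq[OF t] xbar_ns_bounded z_bounded)
qed (simp add: ubar_ns_formula)

lemma ubar_eq_bounded: "L2_bounded (\<lambda>n i \<omega>. ubar_eq n t \<omega>)"
proof (rule L2_bounded_cong_normalized)
  show "L2_bounded (\<lambda>n i \<omega>. \<theta>b n t *v xbar_eq n t \<omega>)"
    by (intro L2_bounded_matrix_mult gains_Bseq[OF t] xbar_eq_bounded)
qed (simp add: ubar_eq_formula)

lemma u_diff_vanishing: "L2_vanishing (\<lambda>n i \<omega>. u_ns n t i \<omega> - u_eq n t i \<omega>)"
proof (rule L2_vanishing_cong)
  note gaps = gain_gaps_tendsto_zero[OF t]
  show "L2_vanishing (\<lambda>n i \<omega>. \<theta> n t *v (x_ns n t i \<omega> - x_eq n t i \<omega>)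
      + (\<eta> n t - \<theta> n t) *v x_ns n t i \<omega>
      + ((\<eta>b n t - \<eta> n t) - (\<theta>b n t - \<theta> n t)) *v z n t
      - (\<theta>b n t - \<theta> n t) *v (xbar_eq n t \<omega> - z n t))"
    by (intro L2_vanishing_diff L2_vanishing_add L2_vanishing_matrix_mult gains_Bseq[OF t]
        x_diff_vanishing xbar_eq_dev_vanishing
        L2_vanishing_matrix_mult_tendsto_zero[OF gaps(1) x_ns_bounded]
        L2_vanishing_matrix_mult_tendsto_zero[OF gaps(2) z_bounded])
qed (simp add: u_ns_def u_eq_def algebra_simps)

lemma ubar_diff_vanishing: "L2_vanishing (\<lambda>n i \<omega>. ubar_ns n t \<omega> - ubar_eq n t \<omega>)"
proof (rule L2_vanishing_cong_normalized)
  note gaps = gain_gaps_tendsto_zero[OF t]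
  show "L2_vanishing (\<lambda>n i \<omega>. \<eta> n t *v (xbar_ns n t \<omega> - z n t) - \<theta>b n t *v (xbar_eq n t \<omega> - z n t)
      + (\<eta>b n t - \<theta>b n t) *v z n t)"
    by (intro L2_vanishing_diff L2_vanishing_add L2_vanishing_matrix_mult gains_Bseq[OF t]
        xbar_ns_dev_vanishing xbar_eq_dev_vanishing
        L2_vanishing_matrix_mult_tendsto_zero[OF gaps(3) z_bounded])
qed (simp add: ubar_ns_formula ubar_eq_formula algebra_simps)

lemma z_Suc_bounded: "L2_bounded (\<lambda>n i \<omega>. z n (Suc t))"
proof -
  have "L2_bounded (\<lambda>n i \<omega>. mA m t *v z n t + mAb m t *v z n t
      + mB m t *v (\<eta>b n t *v z n t) + mBb m t *v (\<eta>b n t *v z n t))"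
    by (intro L2_bounded_add L2_bounded_matrix_mult Bfun_const gains_Bseq[OF t] z_bounded)
  moreover have "1 \<le> t"
    using t by simp
  ultimately show ?thesis
    by (elim L2_bounded_cong) (simp add: z_Suc)
qed

lemma x_ns_Suc_bounded: "L2_bounded (\<lambda>n i \<omega>. x_ns n (Suc t) i \<omega>)"
proof -
  have "L2_bounded (\<lambda>n i \<omega>. mA m t *v x_ns n t i \<omega> + mB m t *v u_ns n t i \<omega>
      + mAb m t *v xbar_ns n t \<omega> + mBb m t *v ubar_ns n t \<omega> + w n t i \<omega>)"
    by (intro L2_bounded_add L2_bounded_matrix_mult Bfun_const gains_Bseq[OF t] noise_bounded[OF t]
        x_ns_bounded u_ns_bounded xbar_ns_bounded ubar_ns_bounded)
  moreover have "1 \<le> t"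
    using t by simp
  ultimately show ?thesis
    by (elim L2_bounded_cong) (auto simp: x_ns_Suc)
qed

lemma x_diff_Suc_vanishing: "L2_vanishing (\<lambda>n i \<omega>. x_ns n (Suc t) i \<omega> - x_eq n (Suc t) i \<omega>)"
proof -
  have "L2_vanishing (\<lambda>n i \<omega>. mA m t *v (x_ns n t i \<omega> - x_eq n t i \<omega>)
      + mB m t *v (u_ns n t i \<omega> - u_eq n t i \<omega>) + mAb m t *v (xbar_ns n t \<omega> - xbar_eq n t \<omega>)
      + mBb m t *v (ubar_ns n t \<omega> - ubar_eq n t \<omega>))"
    by (intro L2_vanishing_add L2_vanishing_matrix_mult Bfun_const
        x_diff_vanishing u_diff_vanishing xbar_diff_vanishing ubar_diff_vanishing)
  moreover have "1 \<le> t"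
    using t by simp
  ultimately show ?thesis
    by (elim L2_vanishing_cong) (auto simp: x_ns_Suc x_eq_Suc algebra_simps)
qed

(* The prediction follows the mean-field dynamics under the gain \<eta>b of the no-sharing
   actions, so their deviation propagates linearly, plus the averaged noise. *)
lemma xbar_ns_dev_Suc_vanishing: "L2_vanishing (\<lambda>n i \<omega>. xbar_ns n (Suc t) \<omega> - z n (Suc t))"
proof -
  have "L2_vanishing (\<lambda>n i \<omega>. mA m t *v (xbar_ns n t \<omega> - z n t)
      + mAb m t *v (xbar_ns n t \<omega> - z n t)
      + mB m t *v (\<eta> n t *v (xbar_ns n t \<omega> - z n t))
      + mBb m t *v (\<eta> n t *v (xbar_ns n t \<omega> - z n t))
      + wbar n t \<omega>)"
    unfolding wbar_def
    by (intro L2_vanishing_add L2_vanishing_matrix_mult Bfun_const gains_Bseq[OF t]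
        xbar_ns_dev_vanishing noise_average_vanishing[OF t])
  moreover have "1 \<le> t"
    using t by simp
  ultimately show ?thesis
    by (elim L2_vanishing_cong_normalized)
       (simp add: xbar_ns_Suc ubar_ns_formula z_Suc algebra_simps)
qed

lemma xbar_eq_dev_Suc_vanishing: "L2_vanishing (\<lambda>n i \<omega>. xbar_eq n (Suc t) \<omega> - z n (Suc t))"
proof -
  have small: "L2_vanishing (\<lambda>n i \<omega>. (\<theta>b n t - \<eta>b n t) *v z n t)"
    by (rule L2_vanishing_matrix_mult_tendsto_zero[OF gain_gaps_tendsto_zero(4)[OF t] z_bounded])
  have "L2_vanishing (\<lambda>n i \<omega>. mA m t *v (xbar_eq n t \<omega> - z n t)
      + mAb m t *v (xbar_eq n t \<omega> - z n t)
      + mB m t *v (\<theta>b n t *v (xbar_eq n t \<omega> - z n t))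
      + mBb m t *v (\<theta>b n t *v (xbar_eq n t \<omega> - z n t))
      + mB m t *v ((\<theta>b n t - \<eta>b n t) *v z n t) + mBb m t *v ((\<theta>b n t - \<eta>b n t) *v z n t)
      + wbar n t \<omega>)"
    unfolding wbar_def
    by (intro L2_vanishing_add L2_vanishing_matrix_mult Bfun_const gains_Bseq[OF t]
        xbar_eq_dev_vanishing small noise_average_vanishing[OF t])
  moreover have "1 \<le> t"
    using t by simp
  ultimately show ?thesis
    by (elim L2_vanishing_cong_normalized)
       (simp add: xbar_eq_Suc ubar_eq_formula z_Suc algebra_simps)
qed

end

lemma approx_at_Suc:
  assumes "approx_at t" and "t \<in> {1..T}"
  shows "approx_at (Suc t)"
  using z_Suc_bounded[OF assms] x_ns_Suc_bounded[OF assms] x_diff_Suc_vanishing[OF assms]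
    xbar_ns_dev_Suc_vanishing[OF assms] xbar_eq_dev_Suc_vanishing[OF assms]
  unfolding approx_at_def by blast

lemma approx_at_all:
  assumes "t \<in> {1..T}"
  shows "approx_at t"
proof -
  have "1 \<le> t" "t \<le> T"
    using assms by auto
  then show ?thesis
  proof (induction t rule: dec_induct)
    case base
    then show ?case
      by (simp add: approx_at_1)
  next
    case (step t)
    then show ?case
      by (intro approx_at_Suc) auto
  qed
qed

lemma stage_cost_diff_vanishing:
  assumes t: "t \<in> {1..T}"
  shows "L1_vanishing (\<lambda>n i \<omega>. stage_cost m n (\<alpha> n) t i (\<lambda>j. x_ns n t j \<omega>) (\<lambda>j. u_ns n t j \<omega>)
                             - stage_cost m n (\<alpha> n) t i (\<lambda>j. x_eq n t j \<omega>) (\<lambda>j. u_eq n t j \<omega>))"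
proof -
  note approx = approx_at_all[OF t]
  note bounded = x_ns_bounded[OF approx t] x_eq_bounded[OF approx t]
    xbar_ns_bounded[OF approx t] xbar_eq_bounded[OF approx t]
    u_ns_bounded[OF approx t] u_eq_bounded[OF approx t]
    ubar_ns_bounded[OF approx t] ubar_eq_bounded[OF approx t]
  note vanishing = x_diff_vanishing[OF approx t] xbar_diff_vanishing[OF approx t]
    u_diff_vanishing[OF approx t] ubar_diff_vanishing[OF approx t]
  show ?thesis
    unfolding stage_cost_diff
    unfolding xbar_ns_def[symmetric] xbar_eq_def[symmetric]
      ubar_ns_def[symmetric] ubar_eq_def[symmetric]
    by (intro L1_vanishing_add L1_vanishing_cmult L1_vanishing_weighted_sum[OF _ weights_abs_sum_le]
        L1_vanishing_bilinear bounded vanishing)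
qed

lemma rcost_g_ns: "rcost m T n (\<alpha> n) (x1 n) (w n) (g_ns n) t0 i \<omega> =
    (\<Sum>t\<in>{t0..T}. stage_cost m n (\<alpha> n) t i (\<lambda>j. x_ns n t j \<omega>) (\<lambda>j. u_ns n t j \<omega>))"
  unfolding rcost_memoryless[OF memoryless_noshare_profile[of "\<eta> n" "\<eta>b n" "z n", folded g_ns_def]]
  by (simp add: x_ns_def u_ns_def g_ns_def noshare_profile_def)

lemma rcost_g_eq: "rcost m T n (\<alpha> n) (x1 n) (w n) (g_eq n) t0 i \<omega> =
    (\<Sum>t\<in>{t0..T}. stage_cost m n (\<alpha> n) t i (\<lambda>j. x_eq n t j \<omega>) (\<lambda>j. u_eq n t j \<omega>))"
  unfolding rcost_memoryless[OF memoryless_lin_profile[of n "\<alpha> n" "\<theta> n" "\<theta>b n", folded g_eq_def]]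
  by (simp add: x_eq_def u_eq_def xbar_eq_def g_eq_def lin_profile_def)

lemma rcost_diff_vanishing:
  assumes t0: "t0 \<in> {1..T}"
  shows "L1_vanishing (\<lambda>n i \<omega>. rcost m T n (\<alpha> n) (x1 n) (w n) (g_ns n) t0 i \<omega>
                             - rcost m T n (\<alpha> n) (x1 n) (w n) (g_eq n) t0 i \<omega>)"
proof -
  have "L1_vanishing (\<lambda>n i \<omega>. \<Sum>t\<in>{t0..T}.
      stage_cost m n (\<alpha> n) t i (\<lambda>j. x_ns n t j \<omega>) (\<lambda>j. u_ns n t j \<omega>)
    - stage_cost m n (\<alpha> n) t i (\<lambda>j. x_eq n t j \<omega>) (\<lambda>j. u_eq n t j \<omega>))"
    using t0 by (intro L1_vanishing_sum stage_cost_diff_vanishing) auto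
  then show ?thesis
    by (rule L1_vanishing_cong) (simp add: rcost_g_ns rcost_g_eq sum_subtractf)
qed

theorem gap_tendsto_zero:
  assumes t0: "t0 \<in> {1..T}"
  shows "(\<lambda>n. gapJ m T n (\<alpha> n) (M n) (x1 n) (w n)
            (noshare_profile (\<eta> n) (\<eta>b n) (zpred m (\<eta>b n) (init_mean n (\<alpha> n) (M n) (x1 n))))
            (lin_profile n (\<alpha> n) (\<theta> n) (\<theta>b n)) t0) \<longlonglongrightarrow> 0"
proof -
  have "\<forall>\<^sub>F n in sequentially. \<forall>i\<in>{1..n}.
      integrable (M n) (rcost m T n (\<alpha> n) (x1 n) (w n) (g_eq n) t0 i)"
    using eq_cost_integrable by eventually_elim (use t0 in \<open>simp add: g_eq_def\<close>)
  from Max_abs_integral_diff_tendsto_zero[OF rcost_diff_vanishing[OF t0] this] show ?thesis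
    by (simp add: gapJ_def Jcost_def g_ns_def g_eq_def z_def)
qed

end

lemma lq_population_intro:
  fixes M :: "nat \<Rightarrow> 'w measure" and x1 :: "nat \<Rightarrow> nat \<Rightarrow> 'w \<Rightarrow> real^'x::finite"
  assumes prob: "\<forall>n\<ge>2. prob_space (M n)"
    and wsum: "\<forall>n\<ge>2. (\<Sum>i\<in>{1..n}. \<alpha> n i) = 1"
    and vanish: "\<exists>n0 \<gamma>max. \<gamma>max > 0 \<and>
                   (\<forall>n>n0. \<forall>i\<in>{1..n}. \<exists>\<gamma>. \<alpha> n i = \<gamma> / real n \<and> \<bar>\<gamma>\<bar> \<le> \<gamma>max)"
    and indep: "\<forall>n\<ge>2. prob_space.indep_vars (M n) (\<lambda>_. borel) (prim_rv (x1 n) (w n)) ({0..T} \<times> {1..n})"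
    and mean_x: "\<forall>n\<ge>2. \<forall>i\<in>{1..n}. integrable (M n) (x1 n i) \<and> (\<integral>\<omega>. x1 n i \<omega> \<partial>M n) = \<mu>x"
    and mean_w: "\<forall>n\<ge>2. \<forall>t\<in>{1..T}. \<forall>i\<in>{1..n}.
                   integrable (M n) (w n t i) \<and> (\<integral>\<omega>. w n t i \<omega> \<partial>M n) = 0"
    and var: "\<exists>C. \<forall>n\<ge>2. \<forall>i\<in>{1..n}.
                integrable (M n) (\<lambda>\<omega>. (norm (x1 n i \<omega> - \<mu>x))\<^sup>2)
              \<and> (\<integral>\<omega>. (norm (x1 n i \<omega> - \<mu>x))\<^sup>2 \<partial>M n) \<le> C
              \<and> (\<forall>t\<in>{1..T}. integrable (M n) (\<lambda>\<omega>. (norm (w n t i \<omega>))\<^sup>2)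
                             \<and> (\<integral>\<omega>. (norm (w n t i \<omega>))\<^sup>2 \<partial>M n) \<le> C)"
  shows "\<exists>\<gamma> C. lq_population M T \<alpha> x1 w \<mu>x \<gamma> C"
proof -
  obtain n0 \<gamma> where \<gamma>: "\<forall>n>n0. \<forall>i\<in>{1..n}. \<exists>g. \<alpha> n i = g / real n \<and> \<bar>g\<bar> \<le> \<gamma>"
    using vanish by blast
  obtain C where C: "\<forall>n\<ge>2. \<forall>i\<in>{1..n}.
      integrable (M n) (\<lambda>\<omega>. (norm (x1 n i \<omega> - \<mu>x))\<^sup>2) \<and> (\<integral>\<omega>. (norm (x1 n i \<omega> - \<mu>x))\<^sup>2 \<partial>M n) \<le> C
    \<and> (\<forall>t\<in>{1..T}. integrable (M n) (\<lambda>\<omega>. (norm (w n t i \<omega>))\<^sup>2)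
                   \<and> (\<integral>\<omega>. (norm (w n t i \<omega>))\<^sup>2 \<partial>M n) \<le> C)"
    using var by blast
  have weights: "\<forall>\<^sub>F n in sequentially. \<forall>i\<in>{1..n}. \<bar>\<alpha> n i\<bar> \<le> \<gamma> / real n"
  proof (rule eventually_sequentiallyI[of "Suc n0"], intro ballI)
    fix n i assume "Suc n0 \<le> n" "i \<in> {1..n}"
    with \<gamma> obtain g where "\<alpha> n i = g / real n" "\<bar>g\<bar> \<le> \<gamma>"
      by (meson Suc_le_lessD)
    then show "\<bar>\<alpha> n i\<bar> \<le> \<gamma> / real n"
      by (simp add: abs_divide divide_right_mono)
  qed
  have "lq_population M T \<alpha> x1 w \<mu>x \<gamma> C"
    using prob wsum weights indep mean_x mean_w C
    by unfold_locales (auto intro: eventually_sequentiallyI[of 2])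
  then show ?thesis
    by blast
qed

theorem lemma1:
  fixes m :: "('x::finite, 'u::finite) lqm" and T :: nat
    and \<alpha> :: "nat \<Rightarrow> nat \<Rightarrow> real"
    and M :: "nat \<Rightarrow> 'w measure"
    and x1 :: "nat \<Rightarrow> nat \<Rightarrow> 'w \<Rightarrow> real^'x"
    and w :: "nat \<Rightarrow> nat \<Rightarrow> nat \<Rightarrow> 'w \<Rightarrow> real^'x"
    and \<mu>x :: "real^'x"
    and \<theta> \<theta>b :: "nat \<Rightarrow> nat \<Rightarrow> real^'x^'u"
    and \<theta>inf \<theta>binf :: "nat \<Rightarrow> real^'x^'u"
  assumes T: "T \<ge> 1"
    and sym: "\<forall>t\<in>{1..T}. transpose (mQ m t) = mQ m t \<and> transpose (mSx m t) = mSx m t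
               \<and> transpose (mQb m t) = mQb m t \<and> transpose (mR m t) = mR m t
               \<and> transpose (mSu m t) = mSu m t \<and> transpose (mRb m t) = mRb m t
               \<and> transpose (mGx m t) = mGx m t \<and> transpose (mGu m t) = mGu m t"
    and prob: "\<forall>n\<ge>2. prob_space (M n)"
    and wsum: "\<forall>n\<ge>2. (\<Sum>i\<in>{1..n}. \<alpha> n i) = 1"
    and vanish: "\<exists>n0 \<gamma>max. \<gamma>max > 0 \<and>
                   (\<forall>n>n0. \<forall>i\<in>{1..n}. \<exists>\<gamma>. \<alpha> n i = \<gamma> / real n \<and> \<bar>\<gamma>\<bar> \<le> \<gamma>max)"
    and indep: "\<forall>n\<ge>2. prob_space.indep_vars (M n) (\<lambda>_. borel) (prim_rv (x1 n) (w n)) ({0..T} \<times> {1..n})"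
    and mean_x: "\<forall>n\<ge>2. \<forall>i\<in>{1..n}. integrable (M n) (x1 n i) \<and> (\<integral>\<omega>. x1 n i \<omega> \<partial>M n) = \<mu>x"
    and mean_w: "\<forall>n\<ge>2. \<forall>t\<in>{1..T}. \<forall>i\<in>{1..n}.
                   integrable (M n) (w n t i) \<and> (\<integral>\<omega>. w n t i \<omega> \<partial>M n) = 0"
    and var: "\<exists>C. \<forall>n\<ge>2. \<forall>i\<in>{1..n}.
                integrable (M n) (\<lambda>\<omega>. (norm (x1 n i \<omega> - \<mu>x))\<^sup>2)
              \<and> (\<integral>\<omega>. (norm (x1 n i \<omega> - \<mu>x))\<^sup>2 \<partial>M n) \<le> C
              \<and> (\<forall>t\<in>{1..T}. integrable (M n) (\<lambda>\<omega>. (norm (w n t i \<omega>))\<^sup>2)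
                             \<and> (\<integral>\<omega>. (norm (w n t i \<omega>))\<^sup>2 \<partial>M n) \<le> C)"
    and A7: "\<exists>n0. (\<forall>n\<ge>n0. n \<ge> 2 \<longrightarrow>
                  is_SPNE m T n (\<alpha> n) (M n) (x1 n) (w n) (lin_profile n (\<alpha> n) (\<theta> n) (\<theta>b n)))
              \<and> (\<exists>K. \<forall>n\<ge>n0. \<forall>t\<in>{1..T}. norm (\<theta> n t) \<le> K \<and> norm (\<theta>b n t) \<le> K)
              \<and> (\<forall>t\<in>{1..T}. (\<lambda>n. \<theta> n t) \<longlonglongrightarrow> \<theta>inf t \<and> (\<lambda>n. \<theta>b n t) \<longlonglongrightarrow> \<theta>binf t)"
  shows "\<forall>t0\<in>{1..T}.
           (\<lambda>n. gapJ m T n (\<alpha> n) (M n) (x1 n) (w n)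
                  (noshare_profile (\<theta> n) (\<theta>b n)
                     (zpred m (\<theta>b n) (init_mean n (\<alpha> n) (M n) (x1 n))))
                  (lin_profile n (\<alpha> n) (\<theta> n) (\<theta>b n)) t0) \<longlonglongrightarrow> 0
         \<and> (\<lambda>n. gapJ m T n (\<alpha> n) (M n) (x1 n) (w n)
                  (noshare_profile \<theta>inf \<theta>binf
                     (zpred m \<theta>binf (init_mean n (\<alpha> n) (M n) (x1 n))))
                  (lin_profile n (\<alpha> n) (\<theta> n) (\<theta>b n)) t0) \<longlonglongrightarrow> 0"
proof -
  obtain \<gamma> C where "lq_population M T \<alpha> x1 w \<mu>x \<gamma> C"
    using lq_population_intro[OF prob wsum vanish indep mean_x mean_w var] by blast
  then interpret lq_population M T \<alpha> x1 w \<mu>x \<gamma> C .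
  obtain n1 where spne: "\<forall>n\<ge>n1. n \<ge> 2 \<longrightarrow>
      is_SPNE m T n (\<alpha> n) (M n) (x1 n) (w n) (lin_profile n (\<alpha> n) (\<theta> n) (\<theta>b n))"
    using A7 by blast
  have "\<forall>\<^sub>F n in sequentially. \<forall>t0\<in>{1..T}. \<forall>i\<in>{1..n}.
      integrable (M n) (rcost m T n (\<alpha> n) (x1 n) (w n) (lin_profile n (\<alpha> n) (\<theta> n) (\<theta>b n)) t0 i)"
    using spne unfolding is_SPNE_def by (intro eventually_sequentiallyI[of "max n1 2"]) auto
  moreover have "\<forall>t\<in>{1..T}. (\<lambda>n. \<theta> n t) \<longlonglongrightarrow> \<theta>inf t \<and> (\<lambda>n. \<theta>b n t) \<longlonglongrightarrow> \<theta>binf t"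
    using A7 by blast
  ultimately interpret eq: lq_comparison M T \<alpha> x1 w \<mu>x \<gamma> C m \<theta> \<theta>b \<theta> \<theta>b \<theta>inf \<theta>binf
    + lim: lq_comparison M T \<alpha> x1 w \<mu>x \<gamma> C m \<theta> \<theta>b "\<lambda>_. \<theta>inf" "\<lambda>_. \<theta>binf" \<theta>inf \<theta>binf
    by unfold_locales auto
  show ?thesis
    using eq.gap_tendsto_zero lim.gap_tendsto_zero by blast
qed

end
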